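(* Let $f,g\in L^\infty$, $z\in\mathbb{D}$, and $K=H_fT_g$. Then $$KT_{\phi_z}=T_{\tilde{\phi_z}}K-(H_fk_z)\otimes(H^*_gk_{\bar z}).$$
   Context: $\mathbb{D}$ is the open unit disk, $L^2$ the Lebesgue space on the unit circle, $H^2$ the Hardy space, $P:L^2\to H^2$ the orthogonal projection. For $h$ on the circle, $\tilde h(z)=h(\bar z)$ and $Uh(z)=\bar z\,\tilde h(z)$. For $f\in L^\infty$, $T_fh=P(fh)$ and $H_fh=PU(fh)$ for $h\in H^2$. For $z\in\mathbb{D}$, $k_z(w)=\frac{\sqrt{1-|z|^2}}{1-\bar z w}$ is the normalized reproducing kernel and $\phi_z(w)=\frac{z-w}{1-\bar z w}$. For $x,y$, $x\otimes y$ is the rank one operator $h\mapsto\langle h,y\rangle x$. *)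

theory Defs
  imports "HOL-Analysis.Analysis"
begin

definition circ :: "complex measure" where
  "circ = distr (uniform_measure lborel {0..2*pi}) borel cis"

(* L^2 and L^infinity of the circle (functions; equality in these spaces is a.e. equality) *)
definition L2 :: "(complex \<Rightarrow> complex) set" where
  "L2 = {h. h \<in> borel_measurable circ \<and> integrable circ (\<lambda>w. (cmod (h w))^2)}"

definition Linf :: "(complex \<Rightarrow> complex) set" where
  "Linf = {f. f \<in> borel_measurable circ \<and> (\<exists>C. AE w in circ. cmod (f w) \<le> C)}"

definition inner2 :: "(complex \<Rightarrow> complex) \<Rightarrow> (complex \<Rightarrow> complex) \<Rightarrow> complex" where
  "inner2 h k = integral\<^sup>L circ (\<lambda>w. h w * cnj (k w))"

(* Hardy space: L^2 functions whose negative Fourier coefficients vanish *)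
definition H2 :: "(complex \<Rightarrow> complex) set" where
  "H2 = {h \<in> L2. \<forall>n::nat. n \<ge> 1 \<longrightarrow> integral\<^sup>L circ (\<lambda>w. h w * w ^ n) = 0}"

(* orthogonal projection L^2 -> H^2 (a representative of the a.e.-class) *)
definition Pproj :: "(complex \<Rightarrow> complex) \<Rightarrow> (complex \<Rightarrow> complex)" where
  "Pproj h = (SOME g. g \<in> H2 \<and> (\<forall>k\<in>H2. inner2 (\<lambda>w. h w - g w) k = 0))"

definition tildeop :: "(complex \<Rightarrow> complex) \<Rightarrow> (complex \<Rightarrow> complex)" where
  "tildeop h = (\<lambda>w. h (cnj w))"

definition Uop :: "(complex \<Rightarrow> complex) \<Rightarrow> (complex \<Rightarrow> complex)" where
  "Uop h = (\<lambda>w. cnj w * tildeop h w)"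

definition Toep :: "(complex \<Rightarrow> complex) \<Rightarrow> (complex \<Rightarrow> complex) \<Rightarrow> (complex \<Rightarrow> complex)" where
  "Toep f h = Pproj (\<lambda>w. f w * h w)"

definition Hank :: "(complex \<Rightarrow> complex) \<Rightarrow> (complex \<Rightarrow> complex) \<Rightarrow> (complex \<Rightarrow> complex)" where
  "Hank f h = Pproj (Uop (\<lambda>w. f w * h w))"

definition adjH2 :: "((complex \<Rightarrow> complex) \<Rightarrow> (complex \<Rightarrow> complex)) \<Rightarrow> (complex \<Rightarrow> complex) \<Rightarrow> (complex \<Rightarrow> complex)" where
  "adjH2 A x = (SOME y. y \<in> H2 \<and> (\<forall>h\<in>H2. inner2 (A h) x = inner2 h y))"

definition kz :: "complex \<Rightarrow> complex \<Rightarrow> complex" where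
  "kz z = (\<lambda>w. complex_of_real (sqrt (1 - (cmod z)^2)) / (1 - cnj z * w))"

definition phiz :: "complex \<Rightarrow> complex \<Rightarrow> complex" where
  "phiz z = (\<lambda>w. (z - w) / (1 - cnj z * w))"

definition rank1 :: "(complex \<Rightarrow> complex) \<Rightarrow> (complex \<Rightarrow> complex) \<Rightarrow> (complex \<Rightarrow> complex) \<Rightarrow> (complex \<Rightarrow> complex)" where
  "rank1 x y h = (\<lambda>w. inner2 h y * x w)"

end

theory Submission
  imports Defs
begin

text \<open>
  Both sides lie in \<open>H2\<close>, so it suffices to compare their inner products with every \<open>k \<in> H2\<close>.
  Put \<open>u = g h\<close> and \<open>p = H\<^sub>f\<^sup>* k = P (cnj f \<cdot> U k)\<close>. Multiplication by \<open>\<phi>\<^sub>z\<close> and by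
  \<open>cnj (tildeop \<phi>\<^sub>z)\<close> maps \<open>H2\<close> into itself; this gives \<open>\<langle>K T\<^sub>\<phi> h, k\<rangle> = \<langle>\<phi>\<^sub>z u, p\<rangle>\<close> and
  \<open>\<langle>T\<^sub>\<phi>\<^sub>~ K h, k\<rangle> = \<langle>\<phi>\<^sub>z (P u), p\<rangle>\<close>, so the commutator equals \<open>\<langle>\<phi>\<^sub>z v, p\<rangle>\<close> with
  \<open>v = u - P u\<close> orthogonal to \<open>H2\<close>. On the circle \<open>cnj \<phi>\<^sub>z = cnj z - (1 - |z|\<^sup>2) E\<close> with
  \<open>E w = cnj w / (1 - z cnj w)\<close>, a multiple of \<open>U k\<^sub>\<zeta>\<close> for \<open>\<zeta> = cnj z\<close>, and \<open>E p\<close> differs from a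
  multiple of \<open>E\<close> by an element of \<open>H2\<close>, the multiple being determined by \<open>\<langle>p, k\<^sub>z\<rangle>\<close>.
  Hence \<open>\<langle>\<phi>\<^sub>z v, p\<rangle> = - \<langle>v, U k\<^sub>\<zeta>\<rangle> \<langle>k\<^sub>z, p\<rangle> = - \<langle>h, H\<^sub>g\<^sup>* k\<^sub>\<zeta>\<rangle> \<langle>H\<^sub>f k\<^sub>z, k\<rangle>\<close>.
  The projection \<open>P\<close> exists by best approximation in \<open>H2\<close>, which rests on the completeness of \<open>L2\<close>.
\<close>

section \<open>The normalized measure on the circle\<close>

lemma borel_measurable_cis [measurable]: "cis \<in> borel_measurable borel"
  by (intro borel_measurable_continuous_onI continuous_intros)

lemma borel_measurable_cnj [measurable]: "cnj \<in> borel_measurable borel"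
  by (intro borel_measurable_continuous_onI continuous_intros)

lemma space_circ [simp]: "space circ = UNIV"
  and sets_circ [simp, measurable_cong]: "sets circ = sets borel"
  by (auto simp: circ_def)

lemma uniform_measure_Icc_density:
  "uniform_measure lborel {0..2*pi} = density lborel (\<lambda>t. ennreal (indicator {0..2*pi} t / (2*pi)))"
  unfolding uniform_measure_def
  by (intro density_cong) (auto simp: divide_ennreal[symmetric] emeasure_lborel_Icc split: split_indicator)

lemma integral_circ:
  fixes F :: "complex \<Rightarrow> complex"
  assumes [measurable]: "F \<in> borel_measurable borel"
  shows "integral\<^sup>L circ F = (\<integral>t. indicator {0..2*pi} t *\<^sub>R F (cis t) \<partial>lborel) / (2*pi)"
proof -
  have "integral\<^sup>L circ F = integral\<^sup>L (uniform_measure lborel {0..2*pi}) (\<lambda>t. F (cis t))"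
    unfolding circ_def by (rule integral_distr) auto
  also have "\<dots> = (\<integral>t. (1/(2*pi)) *\<^sub>R (indicator {0..2*pi} t *\<^sub>R F (cis t)) \<partial>lborel)"
    unfolding uniform_measure_Icc_density
    by (subst integral_density) (auto intro!: Bochner_Integration.integral_cong)
  also have "\<dots> = (\<integral>t. indicator {0..2*pi} t *\<^sub>R F (cis t) \<partial>lborel) / (2*pi)"
    by (simp add: scaleR_conv_of_real)
  finally show ?thesis .
qed

lemma emeasure_circ_UNIV: "emeasure circ UNIV = 1"
proof -
  have "emeasure circ UNIV = emeasure (uniform_measure lborel {0..2*pi}) UNIV"
    unfolding circ_def by (subst emeasure_distr) auto
  also have "\<dots> = 1" by (simp add: emeasure_lborel_Icc divide_ennreal[symmetric])
  finally show ?thesis .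
qed

lemma measure_circ_UNIV [simp]: "measure circ UNIV = 1"
  by (simp add: measure_def emeasure_circ_UNIV)

lemma finite_measure_circ: "finite_measure circ"
  by (rule finite_measureI) (simp add: emeasure_circ_UNIV)

lemma integrable_circ_const [simp]: "integrable circ (\<lambda>w. c :: 'a :: {banach, second_countable_topology})"
  using finite_measure_circ finite_measure.integrable_const by blast

lemma AE_circ_norm_eq_1: "AE w in circ. cmod w = 1"
  unfolding circ_def by (subst AE_distr_iff) auto

lemma AE_circ_norm_le_1: "AE w in circ. cmod w \<le> 1"
  using AE_circ_norm_eq_1 by auto

lemma integral_circ_power: "integral\<^sup>L circ (\<lambda>w. w ^ n) = (if n = 0 then 1 else 0)"
proof (cases "n = 0")
  case False
  have "integral\<^sup>L circ (\<lambda>w. w ^ n) = (\<integral>t. indicator {0..2*pi} t *\<^sub>R cis (real n * t) \<partial>lborel) / (2*pi)"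
    by (subst integral_circ) (auto intro!: Bochner_Integration.integral_cong simp: Complex.DeMoivre)
  also have "(\<integral>t. indicator {0..2*pi} t *\<^sub>R cis (real n * t) \<partial>lborel)
     = cis (real n * (2*pi)) / (\<i> * of_nat n) - cis (real n * 0) / (\<i> * of_nat n)"
  proof (rule integral_FTC_atLeastAtMost)
    fix x
    show "((\<lambda>t. cis (real n * t) / (\<i> * of_nat n)) has_vector_derivative cis (real n * x)) (at x within {0..2*pi})"
      unfolding has_vector_derivative_def
      by (rule has_derivative_eq_rhs, (rule derivative_eq_intros refl)+)
         (use False in \<open>auto simp: fun_eq_iff field_simps scaleR_conv_of_real\<close>)
  qed (auto intro!: continuous_intros)
  also have "cis (real n * (2*pi)) = 1"
    by (metis Complex.DeMoivre cis_2pi power_one)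
  finally show ?thesis using False by simp
qed simp

lemma distr_lborel_reflect: fixes a :: real shows "distr lborel borel (\<lambda>x. a - x) = (lborel :: real measure)"
proof -
  have "lborel = density (distr lborel borel (\<lambda>x. a + (-1) * x)) (\<lambda>_. ennreal \<bar>-1\<bar>)"
    by (rule lborel_real_affine) simp
  then show ?thesis by (simp add: density_1)
qed

lemma distr_uniform_measure_Icc_reflect:
  fixes a :: real
  shows "distr (uniform_measure lborel {0..a}) borel (\<lambda>x. a - x) = uniform_measure lborel {0..a}"
proof (rule measure_eqI)
  fix A :: "real set" assume "A \<in> sets (distr (uniform_measure lborel {0..a}) borel (\<lambda>x. a - x))"
  then have [measurable]: "A \<in> sets borel" by simp
  have [measurable]: "(\<lambda>x. a - x) -` A \<in> sets borel"
    using measurable_sets[OF _ \<open>A \<in> sets borel\<close>, of "\<lambda>x. a - x" borel] by auto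
  have reflect: "{0..a} \<inter> (\<lambda>x. a - x) -` A = (\<lambda>x. a - x) -` ({0..a} \<inter> A)" by auto
  have "emeasure lborel ((\<lambda>x. a - x) -` ({0..a} \<inter> A))
      = emeasure (distr lborel borel (\<lambda>x. a - x)) ({0..a} \<inter> A)"
    by (subst emeasure_distr) auto
  then show "emeasure (distr (uniform_measure lborel {0..a}) borel (\<lambda>x. a - x)) A
      = emeasure (uniform_measure lborel {0..a}) A"
    by (simp add: emeasure_distr emeasure_uniform_measure reflect distr_lborel_reflect del: vimage_Int)
qed simp

lemma distr_circ_cnj: "distr circ borel cnj = circ"
proof -
  have "cnj \<circ> cis = cis \<circ> (\<lambda>x. 2*pi - x)"
    by (auto simp: fun_eq_iff complex_eq_iff cis_cnj)
  then have "distr circ borel cnj = distr (distr (uniform_measure lborel {0..2*pi}) borel (\<lambda>x. 2*pi - x)) borel cis"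
    unfolding circ_def by (simp add: distr_distr)
  then show ?thesis
    by (simp add: distr_uniform_measure_Icc_reflect circ_def)
qed

lemma integral_circ_cnj:
  fixes F :: "complex \<Rightarrow> 'b::{banach, second_countable_topology}"
  assumes [measurable]: "F \<in> borel_measurable borel"
  shows "integral\<^sup>L circ (\<lambda>w. F (cnj w)) = integral\<^sup>L circ F"
  by (subst (2) distr_circ_cnj[symmetric]) (simp add: integral_distr)

lemma integrable_circ_cnj_iff:
  fixes F :: "complex \<Rightarrow> 'b::{banach, second_countable_topology}"
  assumes [measurable]: "F \<in> borel_measurable borel"
  shows "integrable circ (\<lambda>w. F (cnj w)) \<longleftrightarrow> integrable circ F"
  by (subst (2) distr_circ_cnj[symmetric]) (simp add: integrable_distr_eq)

lemma AE_circ_cnj_iff: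
  assumes [measurable]: "Measurable.pred borel P"
  shows "(AE w in circ. P (cnj w)) \<longleftrightarrow> (AE w in circ. P w)"
  by (subst (2) distr_circ_cnj[symmetric]) (simp add: AE_distr_iff)

section \<open>The space \<open>L2\<close> of the circle\<close>

text \<open>Elements of \<open>L2\<close> are functions, not a.e.-classes, so \<open>sqnorm2\<close> is only a seminorm.\<close>

definition sqnorm2 :: "(complex \<Rightarrow> complex) \<Rightarrow> real" where
  "sqnorm2 h = integral\<^sup>L circ (\<lambda>w. (cmod (h w))\<^sup>2)"

lemma L2_borel_measurable [measurable_dest]: "h \<in> L2 \<Longrightarrow> h \<in> borel_measurable borel"
  by (auto simp: L2_def)

lemma L2_integrable_sq: "h \<in> L2 \<Longrightarrow> integrable circ (\<lambda>w. (cmod (h w))\<^sup>2)"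
  by (auto simp: L2_def)

lemma L2I: "h \<in> borel_measurable borel \<Longrightarrow> integrable circ (\<lambda>w. (cmod (h w))\<^sup>2) \<Longrightarrow> h \<in> L2"
  by (auto simp: L2_def)

lemma L2_bounded:
  assumes [measurable]: "h \<in> borel_measurable borel" and "AE w in circ. cmod (h w) \<le> C"
  shows "h \<in> L2"
proof (rule L2I)
  show "integrable circ (\<lambda>w. (cmod (h w))\<^sup>2)"
  proof (rule Bochner_Integration.integrable_bound[OF integrable_circ_const[of "C\<^sup>2"]])
    show "AE w in circ. norm ((cmod (h w))\<^sup>2) \<le> norm (C\<^sup>2)"
      using assms(2) by eventually_elim (auto intro!: power_mono simp: abs_le_iff)
  qed auto
qed simp

lemma L2_add:
  assumes "h \<in> L2" "k \<in> L2" shows "(\<lambda>w. h w + k w) \<in> L2"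
proof (rule L2I)
  have [measurable]: "h \<in> borel_measurable borel" "k \<in> borel_measurable borel" using assms by auto
  show "(\<lambda>w. h w + k w) \<in> borel_measurable borel" by measurable
  show "integrable circ (\<lambda>w. (cmod (h w + k w))\<^sup>2)"
  proof (rule Bochner_Integration.integrable_bound)
    show "integrable circ (\<lambda>w. 2 * (cmod (h w))\<^sup>2 + 2 * (cmod (k w))\<^sup>2)"
      using assms by (auto intro!: L2_integrable_sq)
    have "(cmod (h w + k w))\<^sup>2 \<le> 2 * (cmod (h w))\<^sup>2 + 2 * (cmod (k w))\<^sup>2" for w
    proof -
      have "(cmod (h w + k w))\<^sup>2 \<le> (cmod (h w) + cmod (k w))\<^sup>2"
        by (intro power_mono norm_triangle_ineq) auto
      then show ?thesis using sum_squares_bound[of "cmod (h w)" "cmod (k w)"] by (simp add: power2_sum)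
    qed
    then show "AE w in circ. norm ((cmod (h w + k w))\<^sup>2) \<le> norm (2 * (cmod (h w))\<^sup>2 + 2 * (cmod (k w))\<^sup>2)"
      by simp
  qed measurable
qed

lemma L2_mult_bounded:
  assumes [measurable]: "f \<in> borel_measurable borel" and f: "AE w in circ. cmod (f w) \<le> C"
    and h: "h \<in> L2"
  shows "(\<lambda>w. f w * h w) \<in> L2"
proof (rule L2I)
  have [measurable]: "h \<in> borel_measurable borel" using h by auto
  show "(\<lambda>w. f w * h w) \<in> borel_measurable borel" by measurable
  show "integrable circ (\<lambda>w. (cmod (f w * h w))\<^sup>2)"
  proof (rule Bochner_Integration.integrable_bound)
    show "integrable circ (\<lambda>w. C\<^sup>2 * (cmod (h w))\<^sup>2)"
      using h by (auto intro!: L2_integrable_sq)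
    show "AE w in circ. norm ((cmod (f w * h w))\<^sup>2) \<le> norm (C\<^sup>2 * (cmod (h w))\<^sup>2)"
      using f
    proof eventually_elim
      case (elim w)
      then have "(cmod (f w))\<^sup>2 \<le> C\<^sup>2" by (intro power_mono) auto
      then have "(cmod (f w))\<^sup>2 * (cmod (h w))\<^sup>2 \<le> C\<^sup>2 * (cmod (h w))\<^sup>2"
        by (rule mult_right_mono) simp
      then show ?case by (simp add: norm_mult power_mult_distrib)
    qed
  qed measurable
qed

lemma L2_cmult: "h \<in> L2 \<Longrightarrow> (\<lambda>w. c * h w) \<in> L2"
  by (rule L2_mult_bounded[of "\<lambda>_. c" "cmod c"]) auto

lemma L2_diff: "h \<in> L2 \<Longrightarrow> k \<in> L2 \<Longrightarrow> (\<lambda>w. h w - k w) \<in> L2"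
  using L2_add[of h "\<lambda>w. (-1) * k w"] L2_cmult[of k "-1"] by simp

lemma L2_tildeop: assumes "h \<in> L2" shows "tildeop h \<in> L2"
proof (rule L2I)
  have [measurable]: "h \<in> borel_measurable borel" using assms by auto
  show "tildeop h \<in> borel_measurable borel" unfolding tildeop_def by measurable
  show "integrable circ (\<lambda>w. (cmod (tildeop h w))\<^sup>2)"
    unfolding tildeop_def using L2_integrable_sq[OF assms]
    by (subst integrable_circ_cnj_iff[where F="\<lambda>w. (cmod (h w))\<^sup>2"]) auto
qed

lemma L2_Uop: "h \<in> L2 \<Longrightarrow> Uop h \<in> L2"
  unfolding Uop_def
  by (rule L2_mult_bounded[of cnj 1]) (use AE_circ_norm_le_1 L2_tildeop in auto)

lemma Linf_borel_measurable [measurable_dest]: "f \<in> Linf \<Longrightarrow> f \<in> borel_measurable borel"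
  by (auto simp: Linf_def)

lemma Linf_mult_L2: "f \<in> Linf \<Longrightarrow> h \<in> L2 \<Longrightarrow> (\<lambda>w. f w * h w) \<in> L2"
  unfolding Linf_def using L2_mult_bounded by auto

lemma Linf_cnj: "f \<in> Linf \<Longrightarrow> (\<lambda>w. cnj (f w)) \<in> Linf"
  unfolding Linf_def by auto

lemma integrable_mult_bounded:
  assumes "integrable circ h" and [measurable]: "e \<in> borel_measurable borel"
    and "AE w in circ. cmod (e w) \<le> C"
  shows "integrable circ (\<lambda>w. h w * e w)"
proof (rule Bochner_Integration.integrable_bound)
  show "integrable circ (\<lambda>w. C * cmod (h w))" using assms(1) by simp
  have [measurable]: "h \<in> borel_measurable borel"
    using borel_measurable_integrable[OF assms(1)] by simp
  show "(\<lambda>w. h w * e w) \<in> borel_measurable circ" by measurable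
  show "AE w in circ. norm (h w * e w) \<le> norm (C * cmod (h w))"
    using assms(3) by eventually_elim (auto simp: norm_mult abs_mult mult.commute intro!: mult_right_mono)
qed

lemma integrable_L2_mult_cnj:
  assumes "h \<in> L2" "k \<in> L2" shows "integrable circ (\<lambda>w. h w * cnj (k w))"
proof (rule Bochner_Integration.integrable_bound)
  have [measurable]: "h \<in> borel_measurable borel" "k \<in> borel_measurable borel" using assms by auto
  show "integrable circ (\<lambda>w. (cmod (h w))\<^sup>2 + (cmod (k w))\<^sup>2)"
    using assms by (auto intro!: L2_integrable_sq)
  have "cmod (h w) * cmod (k w) \<le> (cmod (h w))\<^sup>2 + (cmod (k w))\<^sup>2" for w
  proof -
    have "0 \<le> cmod (h w) * cmod (k w)" by simp
    then show ?thesis using sum_squares_bound[of "cmod (h w)" "cmod (k w)"] by linarith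
  qed
  then show "AE w in circ. norm (h w * cnj (k w)) \<le> norm ((cmod (h w))\<^sup>2 + (cmod (k w))\<^sup>2)"
    by (simp add: norm_mult)
  show "(\<lambda>w. h w * cnj (k w)) \<in> borel_measurable circ" by measurable
qed

lemma L2_one: "(\<lambda>w. 1) \<in> L2"
  by (rule L2_bounded[of _ 1]) auto

lemma L2_integrable: "h \<in> L2 \<Longrightarrow> integrable circ h"
  using integrable_L2_mult_cnj[OF _ L2_one, of h] by simp

lemma AE_circ_norm_power_le_1: "AE w in circ. cmod (w ^ n) \<le> 1"
  using AE_circ_norm_eq_1 by eventually_elim (simp add: norm_power)

lemma integrable_L2_mult_power: "h \<in> L2 \<Longrightarrow> integrable circ (\<lambda>w. h w * w ^ n)"
  by (rule integrable_mult_bounded[OF L2_integrable _ AE_circ_norm_power_le_1]) auto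

lemma inner2_add_left:
  "h \<in> L2 \<Longrightarrow> k \<in> L2 \<Longrightarrow> l \<in> L2 \<Longrightarrow> inner2 (\<lambda>w. h w + k w) l = inner2 h l + inner2 k l"
  unfolding inner2_def by (simp add: distrib_right integrable_L2_mult_cnj)

lemma inner2_diff_left:
  "h \<in> L2 \<Longrightarrow> k \<in> L2 \<Longrightarrow> l \<in> L2 \<Longrightarrow> inner2 (\<lambda>w. h w - k w) l = inner2 h l - inner2 k l"
  unfolding inner2_def by (simp add: left_diff_distrib integrable_L2_mult_cnj)

lemma inner2_cmult_left: "inner2 (\<lambda>w. c * h w) l = c * inner2 h l"
  unfolding inner2_def by (simp add: mult.assoc)

lemma inner2_commute: "inner2 k h = cnj (inner2 h k)"
proof -
  have "cnj (inner2 h k) = (CLINT w|circ. cnj (h w * cnj (k w)))"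
    unfolding inner2_def by (rule Bochner_Integration.integral_cnj[symmetric])
  then show ?thesis unfolding inner2_def by (simp add: mult.commute)
qed

lemma inner2_add_right:
  "h \<in> L2 \<Longrightarrow> k \<in> L2 \<Longrightarrow> l \<in> L2 \<Longrightarrow> inner2 l (\<lambda>w. h w + k w) = inner2 l h + inner2 l k"
  by (subst (1 2 3) inner2_commute) (simp add: inner2_add_left)

lemma inner2_diff_right:
  "h \<in> L2 \<Longrightarrow> k \<in> L2 \<Longrightarrow> l \<in> L2 \<Longrightarrow> inner2 l (\<lambda>w. h w - k w) = inner2 l h - inner2 l k"
  by (subst (1 2 3) inner2_commute) (simp add: inner2_diff_left)

lemma inner2_cmult_right: "inner2 l (\<lambda>w. c * h w) = cnj c * inner2 l h"
  by (subst (1 2) inner2_commute) (simp add: inner2_cmult_left)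

lemma inner2_mult_swap: "inner2 (\<lambda>w. a w * h w) k = inner2 h (\<lambda>w. cnj (a w) * k w)"
  unfolding inner2_def by (simp add: mult.commute mult.left_commute)

lemma inner2_cong_AE_left:
  assumes [measurable]: "h \<in> borel_measurable borel" "h' \<in> borel_measurable borel" "k \<in> borel_measurable borel"
    and "AE w in circ. h w = h' w"
  shows "inner2 h k = inner2 h' k"
  unfolding inner2_def by (rule integral_cong_AE) (use assms(4) in auto)

lemma inner2_cong_AE_right:
  assumes "h \<in> borel_measurable borel" "h' \<in> borel_measurable borel" "k \<in> borel_measurable borel"
    and "AE w in circ. h w = h' w"
  shows "inner2 k h = inner2 k h'"
  using inner2_cong_AE_left[OF assms] by (metis inner2_commute)

lemma inner2_self: "inner2 h h = complex_of_real (sqnorm2 h)"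
proof -
  have "inner2 h h = (CLINT w|circ. complex_of_real ((cmod (h w))\<^sup>2))"
    unfolding inner2_def by (simp only: complex_norm_square)
  also have "\<dots> = complex_of_real (sqnorm2 h)"
    unfolding sqnorm2_def by (rule integral_complex_of_real)
  finally show ?thesis .
qed

lemma sqnorm2_nonneg: "sqnorm2 h \<ge> 0"
  unfolding sqnorm2_def by simp

lemma AE_zero_if_inner2_self_eq_0:
  assumes "h \<in> L2" "inner2 h h = 0" shows "AE w in circ. h w = 0"
proof -
  have "AE w in circ. (cmod (h w))\<^sup>2 = 0"
    using assms by (subst integral_nonneg_eq_0_iff_AE[symmetric])
      (auto simp: inner2_self sqnorm2_def L2_integrable_sq)
  then show ?thesis by auto
qed

lemma inner2_Uop: assumes "a \<in> L2" "b \<in> L2" shows "inner2 (Uop a) b = inner2 a (Uop b)"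
proof -
  have [measurable]: "a \<in> borel_measurable borel" "b \<in> borel_measurable borel" using assms by auto
  have "inner2 (Uop a) b = integral\<^sup>L circ (\<lambda>w. (\<lambda>w. cnj w * a (cnj w) * cnj (b w)) (cnj w))"
    unfolding inner2_def Uop_def tildeop_def by (rule integral_circ_cnj[symmetric]) measurable
  also have "\<dots> = inner2 a (Uop b)"
    unfolding inner2_def Uop_def tildeop_def by (simp add: mult.commute mult.left_commute)
  finally show ?thesis .
qed

lemma sqnorm2_eq_nn_integral:
  "h \<in> L2 \<Longrightarrow> (\<integral>\<^sup>+w. ennreal ((cmod (h w))\<^sup>2) \<partial>circ) = ennreal (sqnorm2 h)"
  unfolding sqnorm2_def by (subst nn_integral_eq_integral) (auto simp: L2_integrable_sq)

lemma measure_sqnorm2_ge_le: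
  assumes d: "d \<in> L2" and t: "t > 0"
  shows "measure circ {w. t \<le> (cmod (d w))\<^sup>2} \<le> sqnorm2 d / t"
proof -
  have [measurable]: "d \<in> borel_measurable borel" using d by auto
  have "measure circ {w \<in> space circ. t \<le> (cmod (d w))\<^sup>2} \<le> integral\<^sup>L circ (\<lambda>w. (cmod (d w))\<^sup>2) / t"
    by (rule integral_Markov_inequality_measure[where A="space circ"]) (auto intro: L2_integrable_sq d t)
  then show ?thesis by (simp add: sqnorm2_def)
qed

lemma convergent_if_eventually_diff_le_power:
  fixes x :: "nat \<Rightarrow> 'a :: banach"
  assumes "eventually (\<lambda>j. norm (x (Suc j) - x j) \<le> c ^ j) sequentially" and "0 \<le> c" "c < 1"
  shows "convergent x"
proof -
  have "summable (\<lambda>j. x (Suc j) - x j)"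
    using assms by (intro summable_comparison_test_ev[OF _ summable_geometric]) auto
  then have "convergent (\<lambda>k. x 0 + (\<Sum>j<k. x (Suc j) - x j))"
    by (simp add: summable_iff_convergent convergent_add_const_iff)
  then show ?thesis by (simp add: sum_lessThan_telescope)
qed

text \<open>A sequence whose consecutive differences have \<open>sqnorm2 \<le> 8\<^sup>-\<^sup>j\<close> converges a.e.:
  by Markov's inequality the \<open>j\<close>-th difference exceeds \<open>2\<^sup>-\<^sup>j\<close> on a set of measure \<open>\<le> 2\<^sup>-\<^sup>j\<close>,
  so by Borel--Cantelli almost every point lies in only finitely many of these sets.\<close>

lemma AE_convergent_if_sqnorm2_diff_le:
  assumes g: "\<And>j. g j \<in> L2"
    and small: "\<And>j. sqnorm2 (\<lambda>w. g (Suc j) w - g j w) \<le> (1/8)^j"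
  shows "AE w in circ. convergent (\<lambda>j. g j w)"
proof -
  define d where "d j = (\<lambda>w. g (Suc j) w - g j w)" for j
  have dL2: "d j \<in> L2" for j unfolding d_def using g by (intro L2_diff)
  define A where "A j = {w. (1/4::real)^j \<le> (cmod (d j w))\<^sup>2}" for j
  have [measurable]: "d j \<in> borel_measurable borel" for j
    using dL2 by auto
  have A_sets [measurable]: "A j \<in> sets circ" for j
    unfolding A_def by measurable
  have measure_A: "measure circ (A j) \<le> (1/2)^j" for j
  proof -
    have "measure circ (A j) \<le> sqnorm2 (d j) / (1/4)^j"
      unfolding A_def by (rule measure_sqnorm2_ge_le[OF dL2]) simp
    also have "\<dots> = sqnorm2 (d j) * 4^j" by (simp add: power_one_over)
    also have "\<dots> \<le> (1/8)^j * 4^j" using small[of j] unfolding d_def by (intro mult_right_mono) auto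
    also have "\<dots> = (1/2)^j" by (subst power_mult_distrib[symmetric]) simp
    finally show ?thesis .
  qed
  have summable_A: "summable (\<lambda>j. measure circ (A j))"
    by (rule summable_comparison_test[where g="\<lambda>j. (1/2::real)^j"]) (auto intro: measure_A)
  have "AE w in circ. eventually (\<lambda>j. w \<in> space circ - A j) sequentially"
    by (rule borel_cantelli_AE1[OF A_sets _ summable_A])
       (use finite_measure_circ finite_measure.emeasure_finite in \<open>auto simp: less_top\<close>)
  then show ?thesis
  proof eventually_elim
    case (elim w)
    have "eventually (\<lambda>j. norm (d j w) \<le> (1/2)^j) sequentially"
      using elim
    proof eventually_elim
      case (elim j)
      have "((1/2::real)^j)\<^sup>2 = ((1/2)\<^sup>2)^j"
        by (metis power_mult mult.commute)
      then have "((1/2::real)^j)\<^sup>2 = (1/4)^j"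
        by (simp add: power2_eq_square)
      then have "(cmod (d j w))\<^sup>2 < ((1/2::real)^j)\<^sup>2"
        using elim by (auto simp: A_def)
      then have "cmod (d j w) < (1/2::real)^j"
        by (rule power_less_imp_less_base) simp
      then show ?case by simp
    qed
    then show ?case
      unfolding d_def by (rule convergent_if_eventually_diff_le_power) auto
  qed
qed

text \<open>Fatou's lemma applied to \<open>|x - g k|\<^sup>2\<close>.\<close>

lemma sqnorm2_diff_AE_limit_le:
  assumes x: "x \<in> L2" and g: "\<And>k. g k \<in> L2" and [measurable]: "G \<in> borel_measurable borel"
    and lim: "AE w in circ. (\<lambda>k. g k w) \<longlonglongrightarrow> G w"
    and bound: "\<And>k. k \<ge> K \<Longrightarrow> sqnorm2 (\<lambda>w. x w - g k w) \<le> B"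
  shows "(\<lambda>w. x w - G w) \<in> L2" and "sqnorm2 (\<lambda>w. x w - G w) \<le> B"
proof -
  have [measurable]: "x \<in> borel_measurable borel" "g k \<in> borel_measurable borel" for k
    using x g by auto
  define u where "u k w = ennreal ((cmod (x w - g k w))\<^sup>2)" for k w
  have [measurable]: "u k \<in> borel_measurable circ" for k unfolding u_def by measurable
  have "AE w in circ. liminf (\<lambda>k. u k w) = ennreal ((cmod (x w - G w))\<^sup>2)"
    using lim
  proof eventually_elim
    case (elim w)
    have "(\<lambda>k. u k w) \<longlonglongrightarrow> ennreal ((cmod (x w - G w))\<^sup>2)"
      unfolding u_def by (intro tendsto_ennrealI tendsto_intros elim)
    then show ?case by (intro lim_imp_Liminf) auto
  qed
  then have "(\<integral>\<^sup>+w. ennreal ((cmod (x w - G w))\<^sup>2) \<partial>circ) = (\<integral>\<^sup>+w. liminf (\<lambda>k. u k w) \<partial>circ)"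
    by (intro nn_integral_cong_AE) auto
  also have "\<dots> \<le> liminf (\<lambda>k. integral\<^sup>N circ (u k))"
    by (rule nn_integral_liminf) measurable
  also have "\<dots> \<le> ennreal B"
  proof (rule Liminf_le)
    show "eventually (\<lambda>k. integral\<^sup>N circ (u k) \<le> ennreal B) sequentially"
      unfolding eventually_sequentially u_def
      using bound by (auto simp: sqnorm2_eq_nn_integral L2_diff x g intro!: exI[of _ K] ennreal_leI)
  qed simp
  finally have fin: "(\<integral>\<^sup>+w. ennreal ((cmod (x w - G w))\<^sup>2) \<partial>circ) \<le> ennreal B" .
  then have "integrable circ (\<lambda>w. (cmod (x w - G w))\<^sup>2)"
    unfolding integrable_iff_bounded by (auto simp: less_top[symmetric] top_unique)
  then show L: "(\<lambda>w. x w - G w) \<in> L2" by (intro L2I) auto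
  have "ennreal (sqnorm2 (\<lambda>w. x w - G w)) \<le> ennreal B"
    using fin sqnorm2_eq_nn_integral[OF L] by simp
  moreover have "0 \<le> B"
    using bound[of K] sqnorm2_nonneg order_trans by blast
  ultimately show "sqnorm2 (\<lambda>w. x w - G w) \<le> B"
    by (subst (asm) ennreal_le_iff) auto
qed

lemma LIMSEQ_zero_if_le_power:
  fixes a :: "nat \<Rightarrow> real"
  assumes "\<And>n. 0 \<le> a n" and "\<And>j n. n \<ge> N j \<Longrightarrow> a n \<le> c ^ j" and "0 \<le> c" "c < 1"
  shows "a \<longlonglongrightarrow> 0"
proof (rule LIMSEQ_I)
  fix e :: real assume "e > 0"
  have "eventually (\<lambda>j. c ^ j < e) sequentially"
    using LIMSEQ_power_zero[of c] assms(3,4) \<open>e > 0\<close> by (intro order_tendstoD(2)) auto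
  then obtain j where j: "c ^ j < e" by (auto simp: eventually_sequentially)
  then show "\<exists>M. \<forall>n\<ge>M. norm (a n - 0) < e"
    using assms(1,2) by (intro exI[of _ "N j"]) (auto intro: le_less_trans)
qed

theorem L2_complete:
  assumes g: "\<And>n. g n \<in> L2"
    and Cauchy: "\<And>e. e > 0 \<Longrightarrow> \<exists>N. \<forall>m\<ge>N. \<forall>n\<ge>N. sqnorm2 (\<lambda>w. g m w - g n w) < e"
  shows "\<exists>G \<in> L2. (\<lambda>n. sqnorm2 (\<lambda>w. g n w - G w)) \<longlonglongrightarrow> 0"
proof -
  have "\<forall>j. \<exists>M. \<forall>m\<ge>M. \<forall>n\<ge>M. sqnorm2 (\<lambda>w. g m w - g n w) < (1/8::real)^j"
    using Cauchy by simp
  then obtain N where N: "\<And>j m n. m \<ge> N j \<Longrightarrow> n \<ge> N j \<Longrightarrow> sqnorm2 (\<lambda>w. g m w - g n w) < (1/8)^j"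
    by metis
  define s where "s j = Max (N ` {..j}) + j" for j
  have N_le_s: "N i \<le> s j" if "i \<le> j" for i j
  proof -
    have "N i \<le> Max (N ` {..j})" using that by (intro Max_ge) auto
    then show ?thesis unfolding s_def by simp
  qed
  define G where "G w = lim (\<lambda>k. g (s k) w)" for w
  have "AE w in circ. convergent (\<lambda>k. g (s k) w)"
    by (rule AE_convergent_if_sqnorm2_diff_le[OF g])
       (use N N_le_s in \<open>auto intro!: less_imp_le\<close>)
  then have lim: "AE w in circ. (\<lambda>k. g (s k) w) \<longlonglongrightarrow> G w"
    unfolding G_def by eventually_elim (simp add: convergent_LIMSEQ_iff)
  have [measurable]: "G \<in> borel_measurable borel"
    using g unfolding G_def by measurable
  have close: "(\<lambda>w. g n w - G w) \<in> L2 \<and> sqnorm2 (\<lambda>w. g n w - G w) \<le> (1/8)^j"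
    if "n \<ge> N j" for n j
  proof -
    have "sqnorm2 (\<lambda>w. g n w - g (s k) w) \<le> (1/8)^j" if "k \<ge> j" for k
      using N[OF \<open>n \<ge> N j\<close> N_le_s[OF that]] by simp
    then show ?thesis
      using sqnorm2_diff_AE_limit_le[OF g[of n] g \<open>G \<in> borel_measurable borel\<close> lim] by blast
  qed
  have "G \<in> L2"
    using L2_diff[OF g[of "N 0"] conjunct1[OF close[of 0 "N 0"]]] by simp
  moreover have "(\<lambda>n. sqnorm2 (\<lambda>w. g n w - G w)) \<longlonglongrightarrow> 0"
    by (rule LIMSEQ_zero_if_le_power[where c="1/8" and N=N]) (use close sqnorm2_nonneg in auto)
  ultimately show ?thesis by blast
qed

lemma sqnorm2_cmult: "sqnorm2 (\<lambda>w. c * h w) = (cmod c)\<^sup>2 * sqnorm2 h"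
  unfolding sqnorm2_def by (simp add: norm_mult power_mult_distrib)

lemma sqnorm2_diff_cmult:
  assumes v: "v \<in> L2" and k: "k \<in> L2"
  shows "sqnorm2 (\<lambda>w. v w - c * k w) = sqnorm2 v - 2 * Re (cnj c * inner2 v k) + (cmod c)\<^sup>2 * sqnorm2 k"
proof -
  have ck: "(\<lambda>w. c * k w) \<in> L2" using k by (rule L2_cmult)
  have "complex_of_real (sqnorm2 (\<lambda>w. v w - c * k w)) = inner2 (\<lambda>w. v w - c * k w) (\<lambda>w. v w - c * k w)"
    by (simp add: inner2_self)
  also have "\<dots> = inner2 v v - cnj c * inner2 v k - c * inner2 k v + c * cnj c * inner2 k k"
    using v k ck L2_diff[OF v ck]
    by (simp add: inner2_diff_left inner2_diff_right inner2_cmult_left inner2_cmult_right algebra_simps)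
  also have "c * inner2 k v = cnj (cnj c * inner2 v k)"
    by (simp add: inner2_commute[of k v])
  also have "c * cnj c = complex_of_real ((cmod c)\<^sup>2)"
    by (rule complex_norm_square[symmetric])
  also have "inner2 v v - cnj c * inner2 v k - cnj (cnj c * inner2 v k) + complex_of_real ((cmod c)\<^sup>2) * inner2 k k
      = complex_of_real (sqnorm2 v - 2 * Re (cnj c * inner2 v k) + (cmod c)\<^sup>2 * sqnorm2 k)"
    unfolding inner2_self by (simp only: complex_eq_iff) simp
  finally show ?thesis by (simp only: of_real_eq_iff)
qed

lemma sqnorm2_parallelogram:
  assumes a: "a \<in> L2" and b: "b \<in> L2"
  shows "sqnorm2 (\<lambda>w. a w + b w) + sqnorm2 (\<lambda>w. a w - b w) = 2 * sqnorm2 a + 2 * sqnorm2 b"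
proof -
  have "complex_of_real (sqnorm2 (\<lambda>w. a w + b w) + sqnorm2 (\<lambda>w. a w - b w))
      = complex_of_real (2 * sqnorm2 a + 2 * sqnorm2 b)"
    using a b L2_add[OF a b] L2_diff[OF a b]
    by (simp add: inner2_self[symmetric] inner2_add_left inner2_add_right inner2_diff_left inner2_diff_right)
  then show ?thesis by (simp only: of_real_eq_iff)
qed

lemma norm_add_sq_le_weighted:
  fixes a b :: complex and t :: real
  assumes "t > 0"
  shows "(cmod (a + b))\<^sup>2 \<le> (1 + t) * (cmod a)\<^sup>2 + (1 + 1/t) * (cmod b)\<^sup>2"
proof -
  have "0 \<le> (t * cmod a - cmod b)\<^sup>2" by simp
  then have "2 * cmod a * cmod b \<le> t * (cmod a)\<^sup>2 + (1/t) * (cmod b)\<^sup>2"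
    using assms by (simp add: power2_diff power_mult_distrib field_simps power2_eq_square)
  moreover have "(cmod (a + b))\<^sup>2 \<le> (cmod a + cmod b)\<^sup>2"
    by (intro power_mono norm_triangle_ineq) auto
  ultimately show ?thesis by (simp add: power2_sum algebra_simps)
qed

lemma sqnorm2_add_le:
  assumes "a \<in> L2" "b \<in> L2" "t > 0"
  shows "sqnorm2 (\<lambda>w. a w + b w) \<le> (1 + t) * sqnorm2 a + (1 + 1/t) * sqnorm2 b"
proof -
  have "sqnorm2 (\<lambda>w. a w + b w) \<le> integral\<^sup>L circ (\<lambda>w. (1 + t) * (cmod (a w))\<^sup>2 + (1 + 1/t) * (cmod (b w))\<^sup>2)"
    unfolding sqnorm2_def
    by (intro integral_mono norm_add_sq_le_weighted assms L2_integrable_sq L2_add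
        Bochner_Integration.integrable_add integrable_mult_right)
  also have "\<dots> = (1 + t) * sqnorm2 a + (1 + 1/t) * sqnorm2 b"
    unfolding sqnorm2_def using assms by (simp add: L2_integrable_sq)
  finally show ?thesis .
qed

lemma norm_integral_mult_power_le:
  assumes v: "v \<in> L2" and e: "e > 0"
  shows "cmod (integral\<^sup>L circ (\<lambda>w. v w * w ^ m)) \<le> sqnorm2 v / (2*e) + e/2"
proof -
  have "cmod (integral\<^sup>L circ (\<lambda>w. v w * w ^ m)) \<le> integral\<^sup>L circ (\<lambda>w. norm (v w * w ^ m))"
    by (rule integral_norm_bound)
  also have "\<dots> \<le> integral\<^sup>L circ (\<lambda>w. (cmod (v w))\<^sup>2 / (2*e) + e/2)"
  proof (rule integral_mono_AE)
    show "integrable circ (\<lambda>w. norm (v w * w ^ m))" using integrable_L2_mult_power[OF v] by simp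
    show "integrable circ (\<lambda>w. (cmod (v w))\<^sup>2 / (2*e) + e/2)" using L2_integrable_sq[OF v] by simp
    show "AE w in circ. norm (v w * w ^ m) \<le> (cmod (v w))\<^sup>2 / (2*e) + e/2"
      using AE_circ_norm_eq_1
    proof eventually_elim
      case (elim w)
      have "0 \<le> (cmod (v w) - e)\<^sup>2" by simp
      then have "cmod (v w) \<le> (cmod (v w))\<^sup>2 / (2*e) + e/2"
        using e by (simp add: power2_diff field_simps power2_eq_square)
      then show ?case using elim by (simp add: norm_mult norm_power)
    qed
  qed
  also have "\<dots> = sqnorm2 v / (2*e) + e/2" unfolding sqnorm2_def using L2_integrable_sq[OF v] by simp
  finally show ?thesis .
qed

section \<open>The Hardy space and the Riesz projection\<close>

lemma H2_L2: "h \<in> H2 \<Longrightarrow> h \<in> L2"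
  by (simp add: H2_def)

lemma H2_moment_eq_0: "h \<in> H2 \<Longrightarrow> n \<ge> 1 \<Longrightarrow> integral\<^sup>L circ (\<lambda>w. h w * w ^ n) = 0"
  by (simp add: H2_def)

lemma H2_add: "h \<in> H2 \<Longrightarrow> k \<in> H2 \<Longrightarrow> (\<lambda>w. h w + k w) \<in> H2"
  unfolding H2_def by (auto intro!: L2_add simp: distrib_right integrable_L2_mult_power)

lemma H2_diff: "h \<in> H2 \<Longrightarrow> k \<in> H2 \<Longrightarrow> (\<lambda>w. h w - k w) \<in> H2"
  unfolding H2_def by (auto intro!: L2_diff simp: left_diff_distrib integrable_L2_mult_power)

lemma H2_cmult: "h \<in> H2 \<Longrightarrow> (\<lambda>w. c * h w) \<in> H2"
  unfolding H2_def by (auto intro!: L2_cmult simp: mult.assoc)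

lemma H2_one: "(\<lambda>w. 1) \<in> H2"
  unfolding H2_def by (auto intro!: L2_one simp: integral_circ_power)

lemma H2_closed:
  assumes g: "\<And>n. g n \<in> H2" and G: "G \<in> L2"
    and lim: "(\<lambda>n. sqnorm2 (\<lambda>w. g n w - G w)) \<longlonglongrightarrow> 0"
  shows "G \<in> H2"
  unfolding H2_def
proof (intro CollectI conjI allI impI G)
  fix m :: nat assume "m \<ge> 1"
  have "cmod (integral\<^sup>L circ (\<lambda>w. G w * w ^ m)) \<le> e" if e: "e > 0" for e
  proof -
    obtain n where n: "sqnorm2 (\<lambda>w. g n w - G w) < e\<^sup>2"
      using order_tendstoD(2)[OF lim, of "e\<^sup>2"] e by (auto simp: eventually_sequentially)
    have gL: "g n \<in> L2" and dL: "(\<lambda>w. g n w - G w) \<in> L2"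
      using g H2_L2 G L2_diff by blast+
    have "integral\<^sup>L circ (\<lambda>w. G w * w ^ m)
        = integral\<^sup>L circ (\<lambda>w. g n w * w ^ m) - integral\<^sup>L circ (\<lambda>w. (g n w - G w) * w ^ m)"
      using integrable_L2_mult_power[OF gL] integrable_L2_mult_power[OF dL]
      by (subst Bochner_Integration.integral_diff[symmetric]) (auto simp: algebra_simps)
    also have "integral\<^sup>L circ (\<lambda>w. g n w * w ^ m) = 0"
      using H2_moment_eq_0[OF g \<open>m \<ge> 1\<close>] .
    finally have "cmod (integral\<^sup>L circ (\<lambda>w. G w * w ^ m))
        = cmod (integral\<^sup>L circ (\<lambda>w. (g n w - G w) * w ^ m))"
      by simp
    also have "\<dots> \<le> sqnorm2 (\<lambda>w. g n w - G w) / (2*e) + e/2"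
      by (rule norm_integral_mult_power_le[OF dL e])
    also have "\<dots> \<le> e\<^sup>2 / (2*e) + e/2"
      using n e by (intro add_right_mono divide_right_mono) auto
    also have "\<dots> = e" using e by (simp add: power2_eq_square field_simps)
    finally show ?thesis .
  qed
  then show "integral\<^sup>L circ (\<lambda>w. G w * w ^ m) = 0"
    by (metis dense_le norm_le_zero_iff zero_less_norm_iff linorder_not_less order_refl)
qed

definition H2_dist2 :: "(complex \<Rightarrow> complex) \<Rightarrow> real" where
  "H2_dist2 u = Inf ((\<lambda>g. sqnorm2 (\<lambda>w. u w - g w)) ` H2)"

lemma H2_dist2_le: "g \<in> H2 \<Longrightarrow> H2_dist2 u \<le> sqnorm2 (\<lambda>w. u w - g w)"
  unfolding H2_dist2_def by (rule cInf_lower) (auto intro!: bdd_belowI[of _ 0] sqnorm2_nonneg)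

lemma H2_dist2_nonneg: "0 \<le> H2_dist2 u"
  using H2_dist2_le[OF H2_one] sqnorm2_nonneg unfolding H2_dist2_def
  by (intro cInf_greatest) (auto intro: H2_one)

lemma H2_minimizing_sequence:
  obtains g where "\<And>n. g n \<in> H2" "\<And>n. sqnorm2 (\<lambda>w. u w - g n w) < H2_dist2 u + 1 / (real n + 1)"
proof -
  have "\<exists>g\<in>H2. sqnorm2 (\<lambda>w. u w - g w) < H2_dist2 u + 1 / (real n + 1)" for n
    using cInf_lessD[of "(\<lambda>g. sqnorm2 (\<lambda>w. u w - g w)) ` H2" "H2_dist2 u + 1 / (real n + 1)"] H2_one
    unfolding H2_dist2_def by auto
  then obtain g where "\<And>n. g n \<in> H2 \<and> sqnorm2 (\<lambda>w. u w - g n w) < H2_dist2 u + 1 / (real n + 1)"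
    by metis
  then show ?thesis using that by blast
qed

text \<open>The parallelogram law, applied to \<open>u - g m\<close> and \<open>u - g n\<close> with midpoint \<open>(g m + g n)/2 \<in> H2\<close>,
  makes every minimizing sequence Cauchy.\<close>

lemma H2_minimizing_sequence_Cauchy:
  assumes u: "u \<in> L2" and g: "\<And>n. g n \<in> H2"
    and min: "\<And>n. sqnorm2 (\<lambda>w. u w - g n w) < H2_dist2 u + 1 / (real n + 1)"
    and e: "e > 0"
  shows "\<exists>N. \<forall>m\<ge>N. \<forall>n\<ge>N. sqnorm2 (\<lambda>w. g m w - g n w) < e"
proof -
  have bound: "sqnorm2 (\<lambda>w. g m w - g n w) \<le> 2 / (real n + 1) + 2 / (real m + 1)" for m n
  proof -
    define a where "a = (\<lambda>w. u w - g n w)"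
    define b where "b = (\<lambda>w. u w - g m w)"
    have aL: "a \<in> L2" and bL: "b \<in> L2"
      unfolding a_def b_def using u g H2_L2 L2_diff by blast+
    have mid: "(\<lambda>w. (1/2) * (g n w + g m w)) \<in> H2" using g by (intro H2_cmult H2_add)
    have "(\<lambda>w. a w + b w) = (\<lambda>w. 2 * (u w - (1/2) * (g n w + g m w)))"
      unfolding a_def b_def by (auto simp: algebra_simps)
    then have "sqnorm2 (\<lambda>w. a w + b w) = 4 * sqnorm2 (\<lambda>w. u w - (1/2) * (g n w + g m w))"
      by (simp only: sqnorm2_cmult) simp
    then have "sqnorm2 (\<lambda>w. a w + b w) \<ge> 4 * H2_dist2 u"
      using H2_dist2_le[OF mid, of u] by simp
    moreover have "sqnorm2 (\<lambda>w. a w - b w) = sqnorm2 (\<lambda>w. g m w - g n w)"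
      unfolding a_def b_def by simp
    moreover have "sqnorm2 a < H2_dist2 u + 1 / (real n + 1)" "sqnorm2 b < H2_dist2 u + 1 / (real m + 1)"
      unfolding a_def b_def by (rule min)+
    ultimately show ?thesis
      using sqnorm2_parallelogram[OF aL bL] by argo
  qed
  obtain N :: nat where N: "4 / e < real N" using reals_Archimedean2 by blast
  have small: "4 / (real N + 1) < e" using N e by (simp add: field_simps)
  have mono: "2 / (real k + 1) \<le> 2 / (real N + 1)" if "N \<le> k" for k
    using that by (auto intro!: divide_left_mono)
  show ?thesis
  proof (intro exI allI impI)
    fix m n assume "N \<le> m" "N \<le> n"
    then show "sqnorm2 (\<lambda>w. g m w - g n w) < e"
      using bound[of m n] mono[of m] mono[of n] small by linarith
  qed
qed

lemma sqnorm2_diff_le_if_approx: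
  assumes u: "u \<in> L2" and g: "\<And>n. g n \<in> L2" and G: "G \<in> L2" and d: "0 \<le> d"
    and lim: "(\<lambda>n. sqnorm2 (\<lambda>w. g n w - G w)) \<longlonglongrightarrow> 0"
    and approx: "\<And>n. sqnorm2 (\<lambda>w. u w - g n w) < d + 1 / (real n + 1)"
  shows "sqnorm2 (\<lambda>w. u w - G w) \<le> d"
proof (rule field_le_epsilon)
  fix e :: real assume e: "e > 0"
  define t where "t = e / (3 * (d + 1))"
  have t: "t > 0" "t * d \<le> e / 3"
    unfolding t_def using e d by (auto simp: field_simps)
  have "(\<lambda>n. 1 / (real n + 1)) \<longlonglongrightarrow> 0"
    using LIMSEQ_inverse_real_of_nat by (simp add: inverse_eq_divide add.commute)
  then have "(\<lambda>n. (1 + t) * (1 / (real n + 1)) + (1 + 1/t) * sqnorm2 (\<lambda>w. g n w - G w))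
      \<longlonglongrightarrow> (1 + t) * 0 + (1 + 1/t) * 0"
    by (intro tendsto_intros lim)
  then have "eventually (\<lambda>n. (1 + t) * (1 / (real n + 1)) + (1 + 1/t) * sqnorm2 (\<lambda>w. g n w - G w)
      < 2 * e / 3) sequentially"
    using e by (intro order_tendstoD(2)) auto
  then obtain n where n: "(1 + t) * (1 / (real n + 1)) + (1 + 1/t) * sqnorm2 (\<lambda>w. g n w - G w) < 2 * e / 3"
    by (auto simp: eventually_sequentially)
  have "sqnorm2 (\<lambda>w. u w - G w) = sqnorm2 (\<lambda>w. (u w - g n w) + (g n w - G w))" by simp
  also have "\<dots> \<le> (1 + t) * sqnorm2 (\<lambda>w. u w - g n w) + (1 + 1/t) * sqnorm2 (\<lambda>w. g n w - G w)"
    using u g G t by (intro sqnorm2_add_le L2_diff) auto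
  also have "\<dots> \<le> (1 + t) * (d + 1 / (real n + 1)) + (1 + 1/t) * sqnorm2 (\<lambda>w. g n w - G w)"
    using approx[of n] t by (intro add_right_mono mult_left_mono) auto
  also have "\<dots> = d + t * d + ((1 + t) * (1 / (real n + 1)) + (1 + 1/t) * sqnorm2 (\<lambda>w. g n w - G w))"
    by (simp add: algebra_simps)
  also have "\<dots> \<le> d + e" using t n by linarith
  finally show "sqnorm2 (\<lambda>w. u w - G w) \<le> d + e" .
qed

lemma H2_dist2_attained:
  assumes u: "u \<in> L2"
  obtains G where "G \<in> H2" "sqnorm2 (\<lambda>w. u w - G w) \<le> H2_dist2 u"
proof -
  obtain g where g: "\<And>n. g n \<in> H2" and min: "\<And>n. sqnorm2 (\<lambda>w. u w - g n w) < H2_dist2 u + 1 / (real n + 1)"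
    using H2_minimizing_sequence[of u] by blast
  have gL: "g n \<in> L2" for n using g H2_L2 by blast
  obtain G where GL: "G \<in> L2" and lim: "(\<lambda>n. sqnorm2 (\<lambda>w. g n w - G w)) \<longlonglongrightarrow> 0"
    using L2_complete[of g] gL H2_minimizing_sequence_Cauchy[OF u g min] by blast
  then have "sqnorm2 (\<lambda>w. u w - G w) \<le> H2_dist2 u"
    using sqnorm2_diff_le_if_approx[OF u gL GL H2_dist2_nonneg lim min] by blast
  with H2_closed[OF g GL lim] show ?thesis using that by blast
qed

text \<open>First-order condition for the minimum: perturbing a minimizer \<open>G\<close> along \<open>k \<in> H2\<close>
  by the small multiple \<open>s \<langle>u - G, k\<rangle> k\<close> would decrease the distance unless \<open>\<langle>u - G, k\<rangle> = 0\<close>.\<close>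

lemma orthogonal_if_H2_dist2_attained:
  assumes u: "u \<in> L2" and G: "G \<in> H2" and min: "sqnorm2 (\<lambda>w. u w - G w) \<le> H2_dist2 u"
    and k: "k \<in> H2"
  shows "inner2 (\<lambda>w. u w - G w) k = 0"
proof -
  define a where "a = inner2 (\<lambda>w. u w - G w) k"
  define s where "s = 1 / (sqnorm2 k + 1)"
  have s: "s > 0" "s * sqnorm2 k < 1" unfolding s_def using sqnorm2_nonneg[of k] by (auto simp: field_simps)
  define c where "c = complex_of_real s * a"
  have "(\<lambda>w. G w + c * k w) \<in> H2" using G k by (intro H2_add H2_cmult)
  then have "H2_dist2 u \<le> sqnorm2 (\<lambda>w. u w - (G w + c * k w))" by (rule H2_dist2_le)
  also have "(\<lambda>w. u w - (G w + c * k w)) = (\<lambda>w. (u w - G w) - c * k w)" by (auto simp: algebra_simps)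
  also have "sqnorm2 \<dots> = sqnorm2 (\<lambda>w. u w - G w) - 2 * Re (cnj c * a) + (cmod c)\<^sup>2 * sqnorm2 k"
    unfolding a_def by (rule sqnorm2_diff_cmult[OF L2_diff[OF u H2_L2[OF G]] H2_L2[OF k]])
  also have "Re (cnj c * a) = s * (cmod a)\<^sup>2"
  proof -
    have "cnj c * a = complex_of_real (s * (cmod a)\<^sup>2)"
      unfolding c_def using complex_norm_square[of a] by (simp add: mult.commute mult.left_commute)
    then show ?thesis by simp
  qed
  also have "(cmod c)\<^sup>2 = s\<^sup>2 * (cmod a)\<^sup>2"
    unfolding c_def using s by (simp add: norm_mult power_mult_distrib)
  finally have "0 \<le> s * (cmod a)\<^sup>2 * (s * sqnorm2 k - 2)"
    using min by (simp add: power2_eq_square algebra_simps)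
  then have "s * (cmod a)\<^sup>2 \<le> 0"
    using s by (simp add: mult_le_0_iff zero_le_mult_iff)
  then show ?thesis unfolding a_def using s by (simp add: mult_le_0_iff)
qed

lemma Pproj_spec:
  assumes "u \<in> L2"
  shows "Pproj u \<in> H2 \<and> (\<forall>k\<in>H2. inner2 (\<lambda>w. u w - Pproj u w) k = 0)"
proof -
  obtain G where "G \<in> H2" "sqnorm2 (\<lambda>w. u w - G w) \<le> H2_dist2 u"
    using H2_dist2_attained[OF assms] .
  then have "\<exists>G. G \<in> H2 \<and> (\<forall>k\<in>H2. inner2 (\<lambda>w. u w - G w) k = 0)"
    using orthogonal_if_H2_dist2_attained[OF assms] by blast
  then show ?thesis unfolding Pproj_def by (rule someI_ex)
qed

lemma Pproj_H2: "u \<in> L2 \<Longrightarrow> Pproj u \<in> H2"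
  using Pproj_spec by blast

lemma Pproj_L2: "u \<in> L2 \<Longrightarrow> Pproj u \<in> L2"
  using Pproj_H2 H2_L2 by blast

lemma inner2_Pproj_left: assumes "u \<in> L2" "k \<in> H2" shows "inner2 (Pproj u) k = inner2 u k"
  using inner2_diff_left[OF assms(1) Pproj_L2[OF assms(1)] H2_L2[OF assms(2)]] Pproj_spec[OF assms(1)] assms(2)
  by simp

lemma inner2_Pproj_right: "u \<in> L2 \<Longrightarrow> k \<in> H2 \<Longrightarrow> inner2 k (Pproj u) = inner2 k u"
  using inner2_Pproj_left by (metis inner2_commute)

lemma H2_AE_eq_if_inner2_eq:
  assumes a: "a \<in> H2" and b: "b \<in> H2" and eq: "\<And>k. k \<in> H2 \<Longrightarrow> inner2 a k = inner2 b k"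
  shows "AE w in circ. a w = b w"
proof -
  have d: "(\<lambda>w. a w - b w) \<in> H2" using a b by (rule H2_diff)
  have "inner2 (\<lambda>w. a w - b w) (\<lambda>w. a w - b w) = 0"
    using eq[OF d] a b d by (simp add: inner2_diff_left H2_L2)
  then show ?thesis using AE_zero_if_inner2_self_eq_0 d H2_L2 by fastforce
qed

lemma Pproj_H2_AE_eq: assumes "h \<in> H2" shows "AE w in circ. Pproj h w = h w"
  using assms by (intro H2_AE_eq_if_inner2_eq Pproj_H2 H2_L2) (auto simp: inner2_Pproj_left H2_L2)

section \<open>Multipliers of \<open>H2\<close> and the Szeg\<H>o kernel\<close>

lemma norm_inverse_one_minus_mult_le:
  fixes a e :: complex
  assumes a: "cmod a < 1" and e: "cmod e \<le> 1"
  shows "cmod (1 / (1 - a * e)) \<le> 1 / (1 - cmod a)"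
proof -
  have "cmod (a * e) \<le> cmod a" using e mult_left_le[of "cmod e" "cmod a"] by (simp add: norm_mult)
  moreover have "1 - cmod (a * e) \<le> cmod (1 - a * e)"
    using norm_triangle_ineq2[of 1 "a * e"] by simp
  ultimately have "1 - cmod a \<le> cmod (1 - a * e)" by linarith
  then show ?thesis using a by (simp add: norm_divide divide_simps)
qed

lemma sums_integral_geometric:
  fixes k e :: "complex \<Rightarrow> complex" and a :: complex
  assumes k: "integrable circ k" and [measurable]: "e \<in> borel_measurable borel"
    and e: "AE w in circ. cmod (e w) \<le> 1" and a: "cmod a < 1"
  shows "(\<lambda>j. a ^ j * integral\<^sup>L circ (\<lambda>w. k w * e w ^ j)) sums integral\<^sup>L circ (\<lambda>w. k w / (1 - a * e w))"
proof -
  have [measurable]: "k \<in> borel_measurable borel" using borel_measurable_integrable[OF k] by simp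
  define f where "f j w = a ^ j * (k w * e w ^ j)" for j w
  have f_le: "AE w in circ. \<forall>j. norm (f j w) \<le> cmod a ^ j * cmod (k w)"
    using e by eventually_elim
      (auto simp: f_def norm_mult norm_power intro!: mult_left_mono mult_left_le power_le_one)
  have ej: "AE w in circ. cmod (e w ^ j) \<le> 1" for j
    using e by eventually_elim (simp add: norm_power power_le_one)
  have int: "integrable circ (f j)" for j
    unfolding f_def using integrable_mult_bounded[OF k _ ej[of j]] by simp
  have "AE w in circ. summable (\<lambda>j. norm (f j w))"
    using f_le by eventually_elim
      (rule summable_comparison_test[OF _ summable_mult2[OF summable_geometric]], use a in auto)
  moreover have "summable (\<lambda>j. integral\<^sup>L circ (\<lambda>w. norm (f j w)))"
  proof (rule summable_comparison_test[OF _ summable_mult2[OF summable_geometric]])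
    show "norm (cmod a) < 1" using a by simp
    have "integral\<^sup>L circ (\<lambda>w. norm (f j w)) \<le> integral\<^sup>L circ (\<lambda>w. cmod a ^ j * cmod (k w))" for j
      using f_le int k by (intro integral_mono_AE) (auto elim!: eventually_mono)
    then show "\<exists>N. \<forall>j\<ge>N. norm (integral\<^sup>L circ (\<lambda>w. norm (f j w))) \<le> cmod a ^ j * integral\<^sup>L circ (\<lambda>w. cmod (k w))"
      by auto
  qed
  ultimately have "(\<lambda>j. integral\<^sup>L circ (f j)) sums integral\<^sup>L circ (\<lambda>w. \<Sum>j. f j w)"
    using int by (intro sums_integral) auto
  moreover have "integral\<^sup>L circ (\<lambda>w. \<Sum>j. f j w) = integral\<^sup>L circ (\<lambda>w. k w / (1 - a * e w))"
  proof (rule integral_cong_AE)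
    show "AE w in circ. (\<Sum>j. f j w) = k w / (1 - a * e w)"
      using e
    proof eventually_elim
      case (elim w)
      have "norm (a * e w) < 1"
        using a elim mult_left_le[of "cmod (e w)" "cmod a"] by (simp add: norm_mult)
      then have "(\<lambda>j. k w * (a * e w) ^ j) sums (k w * (1 / (1 - a * e w)))"
        by (intro sums_mult geometric_sums)
      then show ?case
        unfolding f_def by (simp add: power_mult_distrib algebra_simps sums_iff)
    qed
  qed (unfold f_def, measurable)
  moreover have "integral\<^sup>L circ (f j) = a ^ j * integral\<^sup>L circ (\<lambda>w. k w * e w ^ j)" for j
    unfolding f_def by (rule integral_mult_right_zero)
  ultimately show ?thesis by simp
qed

lemma H2_mult_id: assumes "k \<in> H2" shows "(\<lambda>w. w * k w) \<in> H2"
proof -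
  have "(\<lambda>w. w * k w) \<in> L2"
    using assms by (intro L2_mult_bounded[OF _ AE_circ_norm_le_1] H2_L2) auto
  moreover have "integral\<^sup>L circ (\<lambda>w. w * k w * w ^ n) = 0" if "n \<ge> 1" for n
    using H2_moment_eq_0[OF assms, of "Suc n"] by (simp add: mult_ac)
  ultimately show ?thesis unfolding H2_def by auto
qed

text \<open>Division by \<open>1 - a w\<close> with \<open>|a| < 1\<close> is multiplication by the power series \<open>\<Sum> a\<^sup>j w\<^sup>j\<close>,
  which preserves the vanishing of the negative Fourier coefficients.\<close>

lemma H2_divide_one_minus_mult:
  assumes k: "k \<in> H2" and a: "cmod a < 1"
  shows "(\<lambda>w. k w / (1 - a * w)) \<in> H2"
proof -
  have kL: "k \<in> L2" using k by (rule H2_L2)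
  have "(\<lambda>w. 1 / (1 - a * w) * k w) \<in> L2"
    using AE_circ_norm_le_1 norm_inverse_one_minus_mult_le[OF a]
    by (intro L2_mult_bounded[OF _ _ kL, of _ "1 / (1 - cmod a)"]) (auto elim!: eventually_mono)
  moreover have "integral\<^sup>L circ (\<lambda>w. k w / (1 - a * w) * w ^ n) = 0" if n: "n \<ge> 1" for n
  proof -
    have "(\<lambda>j. a ^ j * integral\<^sup>L circ (\<lambda>w. (k w * w ^ n) * w ^ j))
        sums integral\<^sup>L circ (\<lambda>w. (k w * w ^ n) / (1 - a * w))"
      by (rule sums_integral_geometric[OF integrable_L2_mult_power[OF kL] _ AE_circ_norm_le_1 a]) simp
    moreover have "integral\<^sup>L circ (\<lambda>w. (k w * w ^ n) * w ^ j) = 0" for j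
      using H2_moment_eq_0[OF k, of "n + j"] n by (simp add: power_add mult.assoc)
    ultimately show ?thesis by (simp add: sums_iff mult_ac)
  qed
  ultimately show ?thesis unfolding H2_def by auto
qed

text \<open>\<open>U_szego z = U (\<lambda>w. 1 / (1 - z w))\<close> is \<open>U\<close> applied to the Szeg\<H>o kernel at \<open>cnj z\<close>.\<close>

definition U_szego :: "complex \<Rightarrow> complex \<Rightarrow> complex" where
  "U_szego z w = cnj w / (1 - z * cnj w)"

lemma borel_measurable_U_szego [measurable]: "U_szego z \<in> borel_measurable borel"
  unfolding U_szego_def by measurable

lemma U_szego_bounded: "cmod z < 1 \<Longrightarrow> AE w in circ. cmod (U_szego z w) \<le> 1 / (1 - cmod z)"
  using AE_circ_norm_eq_1
  by eventually_elim (use norm_inverse_one_minus_mult_le[of z "cnj _"] in \<open>auto simp: U_szego_def norm_divide\<close>)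

lemma L2_U_szego: "cmod z < 1 \<Longrightarrow> U_szego z \<in> L2"
  by (rule L2_bounded[OF _ U_szego_bounded]) auto

lemma inner2_H2_U_szego:
  assumes k: "k \<in> H2" and z: "cmod z < 1"
  shows "inner2 k (U_szego z) = 0"
proof -
  have "inner2 k (U_szego z) = integral\<^sup>L circ (\<lambda>w. k w / (1 - cnj z * w) * w ^ 1)"
    unfolding inner2_def U_szego_def by (simp add: mult.commute)
  also have "\<dots> = 0"
    using z by (intro H2_moment_eq_0 H2_divide_one_minus_mult k) auto
  finally show ?thesis .
qed

text \<open>On the circle \<open>w / (1 - z cnj w) = w + z / (1 - z cnj w)\<close>, so the moments
  \<open>\<integral> p w\<^sup>m / (1 - z cnj w)\<close> of \<open>p \<in> H2\<close> form a geometric progression.\<close>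

lemma integral_H2_mult_power_divide:
  assumes p: "p \<in> H2" and z: "cmod z < 1"
  shows "integral\<^sup>L circ (\<lambda>w. p w * w ^ m / (1 - z * cnj w))
       = z ^ m * integral\<^sup>L circ (\<lambda>w. p w / (1 - z * cnj w))"
proof (induction m)
  case (Suc m)
  have pL: "p \<in> L2" using p by (rule H2_L2)
  have bound: "AE w in circ. cmod (w ^ m / (1 - z * cnj w)) \<le> 1 / (1 - cmod z)"
    using AE_circ_norm_eq_1
    by eventually_elim (use norm_inverse_one_minus_mult_le[of z "cnj _"] z in \<open>auto simp: norm_divide norm_power\<close>)
  have ae: "AE w in circ. p w * w ^ Suc m / (1 - z * cnj w) = p w * w ^ Suc m + z * (p w * w ^ m / (1 - z * cnj w))"
    using AE_circ_norm_eq_1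
  proof eventually_elim
    case (elim w)
    have "1 - z * cnj w \<noteq> 0"
      using z elim by (metis mult.right_neutral norm_mult complex_mod_cnj less_irrefl right_minus_eq norm_one)
    moreover have "w * cnj w = 1" using elim by (simp add: complex_norm_square[symmetric])
    ultimately show ?case by (simp add: field_simps)
  qed
  have [measurable]: "p \<in> borel_measurable borel" using pL by auto
  have "integral\<^sup>L circ (\<lambda>w. p w * w ^ Suc m / (1 - z * cnj w))
      = integral\<^sup>L circ (\<lambda>w. p w * w ^ Suc m + z * (p w * w ^ m / (1 - z * cnj w)))"
    by (rule integral_cong_AE[OF _ _ ae]; measurable)
  also have "\<dots> = integral\<^sup>L circ (\<lambda>w. p w * w ^ Suc m) + integral\<^sup>L circ (\<lambda>w. z * (p w * w ^ m / (1 - z * cnj w)))"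
    using integrable_L2_mult_power[OF pL] integrable_mult_bounded[OF L2_integrable[OF pL] _ bound]
    by (intro Bochner_Integration.integral_add integrable_mult_right) (auto simp del: power_Suc)
  also have "integral\<^sup>L circ (\<lambda>w. z * (p w * w ^ m / (1 - z * cnj w)))
      = z * integral\<^sup>L circ (\<lambda>w. p w * w ^ m / (1 - z * cnj w))"
    by (rule integral_mult_right_zero)
  finally show ?case using Suc.IH H2_moment_eq_0[OF p, of "Suc m"] by simp
qed simp

lemma integral_U_szego_mult_power:
  assumes p: "p \<in> H2" and z: "cmod z < 1" and n: "n \<ge> 1"
  shows "integral\<^sup>L circ (\<lambda>w. U_szego z w * p w * w ^ n)
       = z ^ (n - 1) * integral\<^sup>L circ (\<lambda>w. p w / (1 - z * cnj w))"
proof -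
  have [measurable]: "p \<in> borel_measurable borel" using p by (auto dest: H2_L2)
  have ae: "AE w in circ. U_szego z w * p w * w ^ n = p w * w ^ (n - 1) / (1 - z * cnj w)"
    using AE_circ_norm_eq_1
  proof eventually_elim
    case (elim w)
    have "cnj w * w = 1" using elim by (simp add: complex_norm_square[symmetric] mult.commute)
    then have "cnj w * w ^ n = w ^ (n - 1)"
      using n by (cases n) (auto simp: mult.assoc[symmetric])
    then show ?case unfolding U_szego_def by (simp add: field_simps)
  qed
  have "integral\<^sup>L circ (\<lambda>w. U_szego z w * p w * w ^ n)
      = integral\<^sup>L circ (\<lambda>w. p w * w ^ (n - 1) / (1 - z * cnj w))"
    by (rule integral_cong_AE[OF _ _ ae]; measurable)
  then show ?thesis using integral_H2_mult_power_divide[OF p z, of "n - 1"] by simp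
qed

lemma integral_inverse_one_minus_mult_cnj:
  assumes z: "cmod z < 1"
  shows "integral\<^sup>L circ (\<lambda>w. 1 / (1 - z * cnj w)) = 1"
proof -
  have "cnj (integral\<^sup>L circ (U_szego z)) = inner2 (\<lambda>w. 1) (U_szego z)"
    unfolding inner2_def by (simp flip: Bochner_Integration.integral_cnj)
  then have E0: "integral\<^sup>L circ (U_szego z) = 0"
    using inner2_H2_U_szego[OF H2_one z] by simp
  have "AE w in circ. 1 / (1 - z * cnj w) = 1 + z * U_szego z w"
    using AE_circ_norm_eq_1
  proof eventually_elim
    case (elim w)
    then have "1 - z * cnj w \<noteq> 0"
      using z by (metis complex_mod_cnj norm_mult mult.right_neutral less_irrefl right_minus_eq norm_one)
    then show ?case by (simp add: U_szego_def field_simps)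
  qed
  then have "integral\<^sup>L circ (\<lambda>w. 1 / (1 - z * cnj w)) = integral\<^sup>L circ (\<lambda>w. 1 + z * U_szego z w)"
    by (rule integral_cong_AE[rotated 2]) measurable
  also have "\<dots> = 1"
    using L2_integrable[OF L2_U_szego[OF z]] E0 by simp
  finally show ?thesis .
qed

text \<open>Subtracting the right multiple of \<open>U_szego z\<close> removes the negative Fourier coefficients of
  \<open>U_szego z \<cdot> p\<close>; the multiple is \<open>\<langle>p, k\<^sub>z\<rangle>\<close> up to the normalization of \<open>k\<^sub>z\<close>.\<close>

lemma H2_U_szego_mult_diff:
  assumes p: "p \<in> H2" and z: "cmod z < 1"
  defines "m \<equiv> integral\<^sup>L circ (\<lambda>w. p w / (1 - z * cnj w))"
  shows "(\<lambda>w. U_szego z w * p w - m * U_szego z w) \<in> H2"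
proof -
  have pL: "p \<in> L2" using p by (rule H2_L2)
  have EpL: "(\<lambda>w. U_szego z w * p w) \<in> L2"
    by (rule L2_mult_bounded[OF _ U_szego_bounded[OF z] pL]) simp
  have mEL: "(\<lambda>w. m * U_szego z w) \<in> L2" by (rule L2_cmult[OF L2_U_szego[OF z]])
  have "integral\<^sup>L circ (\<lambda>w. (U_szego z w * p w - m * U_szego z w) * w ^ n) = 0" if n: "n \<ge> 1" for n
  proof -
    have "integral\<^sup>L circ (\<lambda>w. (U_szego z w * p w - m * U_szego z w) * w ^ n)
        = integral\<^sup>L circ (\<lambda>w. U_szego z w * p w * w ^ n) - integral\<^sup>L circ (\<lambda>w. m * (U_szego z w * 1 * w ^ n))"
      using integrable_L2_mult_power[OF EpL, of n] integrable_L2_mult_power[OF mEL, of n]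
      by (subst Bochner_Integration.integral_diff[symmetric]) (auto simp: algebra_simps)
    also have "\<dots> = z ^ (n - 1) * m - m * (z ^ (n - 1) * 1)"
      unfolding integral_mult_right_zero integral_U_szego_mult_power[OF p z n]
        integral_U_szego_mult_power[OF H2_one z n] integral_inverse_one_minus_mult_cnj[OF z] m_def ..
    also have "\<dots> = 0" by simp
    finally show ?thesis .
  qed
  moreover have "(\<lambda>w. U_szego z w * p w - m * U_szego z w) \<in> L2" using EpL mEL by (rule L2_diff)
  ultimately show ?thesis unfolding H2_def by auto
qed

lemma borel_measurable_phiz [measurable]: "phiz z \<in> borel_measurable borel"
  unfolding phiz_def by measurable

lemma borel_measurable_tildeop [measurable]:
  assumes [measurable]: "h \<in> borel_measurable borel" shows "tildeop h \<in> borel_measurable borel"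
  unfolding tildeop_def by measurable

lemma phiz_bounded:
  assumes z: "cmod z < 1" shows "AE w in circ. cmod (phiz z w) \<le> 2 / (1 - cmod z)"
  using AE_circ_norm_eq_1
proof eventually_elim
  case (elim w)
  have "cmod (z - w) \<le> 2" using norm_triangle_ineq4[of z w] z elim by simp
  moreover have "cmod (1 / (1 - cnj z * w)) \<le> 1 / (1 - cmod z)"
    using norm_inverse_one_minus_mult_le[of "cnj z" w] z elim by simp
  ultimately have "cmod (z - w) * cmod (1 / (1 - cnj z * w)) \<le> 2 * (1 / (1 - cmod z))"
    by (intro mult_mono) auto
  then show ?case by (simp add: phiz_def norm_divide)
qed

lemma tildeop_phiz_bounded:
  "cmod z < 1 \<Longrightarrow> AE w in circ. cmod (tildeop (phiz z) w) \<le> 2 / (1 - cmod z)"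
  unfolding tildeop_def by (subst AE_circ_cnj_iff) (auto intro: phiz_bounded)

lemma H2_phiz_mult:
  assumes k: "k \<in> H2" and z: "cmod z < 1"
  shows "(\<lambda>w. phiz z w * k w) \<in> H2"
proof -
  have "(\<lambda>w. z * (k w / (1 - cnj z * w)) - (w * k w) / (1 - cnj z * w)) \<in> H2"
    using z by (intro H2_diff H2_cmult H2_divide_one_minus_mult H2_mult_id k) auto
  then show ?thesis by (simp add: phiz_def diff_divide_distrib algebra_simps)
qed

lemma cnj_tildeop_phiz: "cnj (tildeop (phiz z) w) = (cnj z - w) / (1 - z * w)"
  unfolding tildeop_def phiz_def by simp

lemma H2_cnj_tildeop_phiz_mult:
  assumes k: "k \<in> H2" and z: "cmod z < 1"
  shows "(\<lambda>w. cnj (tildeop (phiz z) w) * k w) \<in> H2"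
proof -
  have "(\<lambda>w. cnj z * (k w / (1 - z * w)) - (w * k w) / (1 - z * w)) \<in> H2"
    by (intro H2_diff H2_cmult H2_divide_one_minus_mult[OF _ z] H2_mult_id k)
  then show ?thesis by (simp add: cnj_tildeop_phiz diff_divide_distrib algebra_simps)
qed

lemma Uop_cnj_tildeop_phiz_mult:
  "Uop (\<lambda>w. cnj (tildeop (phiz z) w) * k w) = (\<lambda>w. cnj (phiz z w) * Uop k w)"
  unfolding Uop_def tildeop_def by (simp add: fun_eq_iff mult_ac)

lemma H2_kz: assumes z: "cmod z < 1" shows "kz z \<in> H2"
proof -
  have "(\<lambda>w. complex_of_real (sqrt (1 - (cmod z)\<^sup>2)) * (1 / (1 - cnj z * w))) \<in> H2"
    using z by (intro H2_cmult H2_divide_one_minus_mult[OF H2_one]) auto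
  then show ?thesis unfolding kz_def by simp
qed

lemma Uop_kz_cnj: "Uop (kz (cnj z)) = (\<lambda>w. complex_of_real (sqrt (1 - (cmod z)\<^sup>2)) * U_szego z w)"
  unfolding Uop_def tildeop_def kz_def U_szego_def by (simp add: fun_eq_iff)

lemma inner2_kz_right:
  "inner2 p (kz z) = complex_of_real (sqrt (1 - (cmod z)\<^sup>2)) * integral\<^sup>L circ (\<lambda>w. p w / (1 - z * cnj w))"
  unfolding inner2_def kz_def by (simp add: integral_mult_right_zero[symmetric] mult_ac)

lemma cnj_phiz_AE:
  assumes z: "cmod z < 1"
  shows "AE w in circ. cnj (phiz z w) = cnj z - complex_of_real (1 - (cmod z)\<^sup>2) * U_szego z w"
  using AE_circ_norm_eq_1
proof eventually_elim
  case (elim w)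
  have "cmod (z * cnj w) < 1" using z elim by (simp add: norm_mult)
  then have "1 - z * cnj w \<noteq> 0" by auto
  moreover have "complex_of_real (1 - (cmod z)\<^sup>2) = 1 - z * cnj z"
    using complex_norm_square[of z] by simp
  ultimately show ?case unfolding phiz_def U_szego_def by (simp add: field_simps)
qed

text \<open>For \<open>v \<perp> H2\<close> the \<open>H2\<close>-component of \<open>\<phi>\<^sub>z v\<close> is \<open>- \<langle>v, U k\<^sub>\<zeta>\<rangle> k\<^sub>z\<close> with \<open>\<zeta> = cnj z\<close>:
  in \<open>cnj \<phi>\<^sub>z \<cdot> k = cnj z \<cdot> k - (1 - |z|\<^sup>2) (r + m U_szego z)\<close> with \<open>r \<in> H2\<close>, only the last summand
  pairs nontrivially with \<open>v\<close>.\<close>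

lemma inner2_phiz_mult_orthogonal:
  assumes z: "cmod z < 1" and v: "v \<in> L2" and orth: "\<And>q. q \<in> H2 \<Longrightarrow> inner2 v q = 0"
    and k: "k \<in> H2"
  shows "inner2 (\<lambda>w. phiz z w * v w) k = - inner2 v (Uop (kz (cnj z))) * inner2 (kz z) k"
proof -
  define s where "s = complex_of_real (sqrt (1 - (cmod z)\<^sup>2))"
  define c where "c = complex_of_real (1 - (cmod z)\<^sup>2)"
  have "0 \<le> 1 - (cmod z)\<^sup>2" using z by (simp add: abs_square_le_1 less_imp_le)
  then have s_sq: "s * s = c" unfolding s_def c_def by (simp flip: of_real_mult)
  have cnj_s: "cnj s = s" and cnj_c: "cnj c = c" unfolding s_def c_def by simp_all
  define E where "E = U_szego z"
  define m where "m = integral\<^sup>L circ (\<lambda>w. k w / (1 - z * cnj w))"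
  define r where "r = (\<lambda>w. E w * k w - m * E w)"
  have rH: "r \<in> H2" unfolding r_def E_def m_def using k z by (rule H2_U_szego_mult_diff)
  have kL: "k \<in> L2" and rL: "r \<in> L2" and EL: "E \<in> L2"
    using k rH L2_U_szego[OF z] unfolding E_def by (auto intro: H2_L2)
  have [measurable]: "v \<in> borel_measurable borel" "k \<in> borel_measurable borel"
    "r \<in> borel_measurable borel" "E \<in> borel_measurable borel"
    using v kL rL EL by auto
  have "AE w in circ. cnj (phiz z w) * k w = cnj z * k w - c * r w - (c * m) * E w"
    using cnj_phiz_AE[OF z]
  proof eventually_elim
    case (elim w)
    show ?case unfolding elim r_def E_def c_def by (simp add: algebra_simps)
  qed
  then have "inner2 (\<lambda>w. phiz z w * v w) k = inner2 v (\<lambda>w. cnj z * k w - c * r w - (c * m) * E w)"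
    unfolding inner2_mult_swap by (rule inner2_cong_AE_right[rotated 3]) measurable
  also have "\<dots> = z * inner2 v k - c * inner2 v r - c * cnj m * inner2 v E"
    using v kL rL EL cnj_c
    by (simp add: inner2_diff_right inner2_cmult_right L2_cmult L2_diff)
  also have "\<dots> = - (s * inner2 v E) * (s * cnj m)"
    using orth[OF k] orth[OF rH] s_sq by (simp add: algebra_simps)
  also have "s * inner2 v E = inner2 v (Uop (kz (cnj z)))"
    unfolding Uop_kz_cnj E_def s_def by (simp add: inner2_cmult_right)
  also have "s * cnj m = inner2 (kz z) k"
    using cnj_s by (subst inner2_commute) (simp add: inner2_kz_right s_def m_def)
  finally show ?thesis .
qed

section \<open>Hankel and Toeplitz operators\<close>

lemma Hank_H2: "f \<in> Linf \<Longrightarrow> x \<in> L2 \<Longrightarrow> Hank f x \<in> H2"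
  unfolding Hank_def by (intro Pproj_H2 L2_Uop Linf_mult_L2)

lemma Toep_bounded_H2:
  "g \<in> borel_measurable borel \<Longrightarrow> AE w in circ. cmod (g w) \<le> C \<Longrightarrow> x \<in> L2 \<Longrightarrow> Toep g x \<in> H2"
  unfolding Toep_def by (intro Pproj_H2 L2_mult_bounded)

lemma Toep_H2: "g \<in> Linf \<Longrightarrow> x \<in> L2 \<Longrightarrow> Toep g x \<in> H2"
  unfolding Toep_def by (intro Pproj_H2 Linf_mult_L2)

lemma inner2_Hank:
  assumes f: "f \<in> Linf" and x: "x \<in> L2" and k: "k \<in> H2"
  shows "inner2 (Hank f x) k = inner2 x (\<lambda>w. cnj (f w) * Uop k w)"
proof -
  have fx: "(\<lambda>w. f w * x w) \<in> L2" using f x by (rule Linf_mult_L2)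
  have "inner2 (Hank f x) k = inner2 (Uop (\<lambda>w. f w * x w)) k"
    unfolding Hank_def using L2_Uop[OF fx] k by (rule inner2_Pproj_left)
  also have "\<dots> = inner2 (\<lambda>w. f w * x w) (Uop k)"
    by (rule inner2_Uop[OF fx H2_L2[OF k]])
  finally show ?thesis by (simp add: inner2_mult_swap)
qed

text \<open>The adjoint \<open>H\<^sub>f\<^sup>* k\<close> of a Hankel operator is \<open>P (cnj f \<cdot> U k)\<close>.\<close>

lemma inner2_Hank_Pproj:
  assumes f: "f \<in> Linf" and y: "y \<in> L2" and k: "k \<in> H2"
  shows "inner2 (Hank f (Pproj y)) k = inner2 y (Pproj (\<lambda>w. cnj (f w) * Uop k w))"
proof -
  have B: "(\<lambda>w. cnj (f w) * Uop k w) \<in> L2"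
    using f k by (intro Linf_mult_L2 Linf_cnj L2_Uop H2_L2)
  have "inner2 (Hank f (Pproj y)) k = inner2 (Pproj y) (\<lambda>w. cnj (f w) * Uop k w)"
    using f y k by (intro inner2_Hank Pproj_L2)
  also have "\<dots> = inner2 (Pproj y) (Pproj (\<lambda>w. cnj (f w) * Uop k w))"
    using B y by (intro inner2_Pproj_right[symmetric] Pproj_H2)
  also have "\<dots> = inner2 y (Pproj (\<lambda>w. cnj (f w) * Uop k w))"
    using B y by (intro inner2_Pproj_left Pproj_H2)
  finally show ?thesis .
qed

lemma inner2_adjH2_Hank:
  assumes g: "g \<in> Linf" and x: "x \<in> H2" and h: "h \<in> H2"
  shows "inner2 h (adjH2 (Hank g) x) = inner2 (Hank g h) x"
proof -
  define y where "y = Pproj (\<lambda>w. cnj (g w) * Uop x w)"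
  have B: "(\<lambda>w. cnj (g w) * Uop x w) \<in> L2"
    using g x by (intro Linf_mult_L2 Linf_cnj L2_Uop H2_L2)
  have "y \<in> H2 \<and> (\<forall>h\<in>H2. inner2 (Hank g h) x = inner2 h y)"
    using B g x by (auto simp: y_def inner2_Hank inner2_Pproj_right H2_L2 intro: Pproj_H2)
  then have "\<exists>y. y \<in> H2 \<and> (\<forall>h\<in>H2. inner2 (Hank g h) x = inner2 h y)" by blast
  then have "\<forall>h\<in>H2. inner2 (Hank g h) x = inner2 h (adjH2 (Hank g) x)"
    unfolding adjH2_def by (rule someI2_ex) blast
  then show ?thesis using h by simp
qed

lemma inner2_Hank_Toep_Toep_phiz:
  assumes f: "f \<in> Linf" and g: "g \<in> Linf" and z: "cmod z < 1" and h: "h \<in> H2" and k: "k \<in> H2"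
  shows "inner2 (Hank f (Toep g (Toep (phiz z) h))) k
       = inner2 (\<lambda>w. phiz z w * (g w * h w)) (Pproj (\<lambda>w. cnj (f w) * Uop k w))"
proof -
  have phL: "(\<lambda>w. phiz z w * h w) \<in> L2" using H2_phiz_mult[OF h z] by (rule H2_L2)
  have TL: "Toep (phiz z) h \<in> L2" unfolding Toep_def using phL by (intro Pproj_L2)
  have pL: "Pproj (\<lambda>w. cnj (f w) * Uop k w) \<in> L2"
    by (rule Pproj_L2[OF Linf_mult_L2[OF Linf_cnj[OF f] L2_Uop[OF H2_L2[OF k]]]])
  have [measurable]: "g \<in> borel_measurable borel" "h \<in> borel_measurable borel"
    "Toep (phiz z) h \<in> borel_measurable borel" "Pproj (\<lambda>w. cnj (f w) * Uop k w) \<in> borel_measurable borel"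
    using g H2_L2[OF h] TL pL by auto
  have "inner2 (Hank f (Toep g (Toep (phiz z) h))) k
      = inner2 (\<lambda>w. g w * Toep (phiz z) h w) (Pproj (\<lambda>w. cnj (f w) * Uop k w))"
    unfolding Toep_def[of g] using f g TL k by (intro inner2_Hank_Pproj Linf_mult_L2)
  also have "\<dots> = inner2 (\<lambda>w. g w * (phiz z w * h w)) (Pproj (\<lambda>w. cnj (f w) * Uop k w))"
  proof (rule inner2_cong_AE_left)
    have "AE w in circ. Toep (phiz z) h w = phiz z w * h w"
      unfolding Toep_def by (rule Pproj_H2_AE_eq[OF H2_phiz_mult[OF h z]])
    then show "AE w in circ. g w * Toep (phiz z) h w = g w * (phiz z w * h w)"
      by eventually_elim simp
  qed measurable
  finally show ?thesis by (simp add: mult_ac)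
qed

lemma inner2_Toep_tildeop_phiz_Hank:
  assumes f: "f \<in> Linf" and z: "cmod z < 1" and x: "x \<in> H2" and k: "k \<in> H2"
  shows "inner2 (Toep (tildeop (phiz z)) (Hank f x)) k
       = inner2 (\<lambda>w. phiz z w * x w) (Pproj (\<lambda>w. cnj (f w) * Uop k w))"
proof -
  have xL: "x \<in> L2" using x by (rule H2_L2)
  have V: "Hank f x \<in> L2" by (rule H2_L2[OF Hank_H2[OF f xL]])
  have "inner2 (Toep (tildeop (phiz z)) (Hank f x)) k = inner2 (\<lambda>w. tildeop (phiz z) w * Hank f x w) k"
    unfolding Toep_def using tildeop_phiz_bounded[OF z] V k by (intro inner2_Pproj_left L2_mult_bounded) auto
  also have "\<dots> = inner2 (Hank f x) (\<lambda>w. cnj (tildeop (phiz z) w) * k w)"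
    by (rule inner2_mult_swap)
  also have "\<dots> = inner2 x (\<lambda>w. cnj (f w) * Uop (\<lambda>w. cnj (tildeop (phiz z) w) * k w) w)"
    using f xL H2_cnj_tildeop_phiz_mult[OF k z] by (rule inner2_Hank)
  also have "\<dots> = inner2 (\<lambda>w. phiz z w * x w) (\<lambda>w. cnj (f w) * Uop k w)"
    unfolding Uop_cnj_tildeop_phiz_mult inner2_mult_swap by (simp add: mult_ac)
  also have "\<dots> = inner2 (\<lambda>w. phiz z w * x w) (Pproj (\<lambda>w. cnj (f w) * Uop k w))"
    using f k H2_phiz_mult[OF x z]
    by (intro inner2_Pproj_right[symmetric] Linf_mult_L2 Linf_cnj L2_Uop H2_L2)
  finally show ?thesis .
qed

lemma inner2_Hank_Toep_phiz_commutator: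
  assumes f: "f \<in> Linf" and g: "g \<in> Linf" and z: "cmod z < 1" and h: "h \<in> H2" and k: "k \<in> H2"
  shows "inner2 (Hank f (Toep g (Toep (phiz z) h))) k
       = inner2 (Toep (tildeop (phiz z)) (Hank f (Toep g h))) k
         - inner2 h (adjH2 (Hank g) (kz (cnj z))) * inner2 (Hank f (kz z)) k"
proof -
  define u where "u = (\<lambda>w. g w * h w)"
  define p where "p = Pproj (\<lambda>w. cnj (f w) * Uop k w)"
  have uL: "u \<in> L2" unfolding u_def using g h by (intro Linf_mult_L2 H2_L2)
  have pH: "p \<in> H2" unfolding p_def using f k by (intro Pproj_H2 Linf_mult_L2 Linf_cnj L2_Uop H2_L2)
  have Pu: "Pproj u \<in> H2" using uL by (rule Pproj_H2)
  have vL: "(\<lambda>w. u w - Pproj u w) \<in> L2" by (rule L2_diff[OF uL H2_L2[OF Pu]])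
  have mult_L2: "(\<lambda>w. phiz z w * y w) \<in> L2" if "y \<in> L2" for y
    using phiz_bounded[OF z] that by (intro L2_mult_bounded) auto
  have "inner2 (Hank f (Toep g (Toep (phiz z) h))) k - inner2 (Toep (tildeop (phiz z)) (Hank f (Toep g h))) k
      = inner2 (\<lambda>w. phiz z w * u w) p - inner2 (\<lambda>w. phiz z w * Pproj u w) p"
    unfolding inner2_Hank_Toep_Toep_phiz[OF f g z h k] inner2_Toep_tildeop_phiz_Hank[OF f z Toep_H2[OF g H2_L2[OF h]] k]
    by (simp add: u_def p_def Toep_def)
  also have "\<dots> = inner2 (\<lambda>w. phiz z w * (u w - Pproj u w)) p"
    using mult_L2[OF uL] mult_L2[OF H2_L2[OF Pu]] pH
    by (simp add: inner2_diff_left[symmetric] H2_L2 right_diff_distrib)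
  also have "\<dots> = - inner2 (\<lambda>w. u w - Pproj u w) (Uop (kz (cnj z))) * inner2 (kz z) p"
    using Pproj_spec[OF uL] by (intro inner2_phiz_mult_orthogonal[OF z vL _ pH]) blast
  also have "inner2 (\<lambda>w. u w - Pproj u w) (Uop (kz (cnj z))) = inner2 (Uop u) (kz (cnj z))"
    using uL Pu L2_Uop[OF H2_L2[OF H2_kz[of "cnj z"]]] z inner2_H2_U_szego[OF Pu z] L2_U_szego[OF z]
    by (simp add: inner2_diff_left H2_L2 inner2_Uop H2_kz Uop_kz_cnj inner2_cmult_right)
  also have "\<dots> = inner2 h (adjH2 (Hank g) (kz (cnj z)))"
    using g h z uL H2_kz[of "cnj z"]
    by (simp add: inner2_adjH2_Hank Hank_def u_def inner2_Pproj_left L2_Uop)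
  also have "inner2 (kz z) p = inner2 (Hank f (kz z)) k"
    unfolding p_def using f k H2_kz[OF z]
    by (simp add: inner2_Hank inner2_Pproj_right H2_L2 Linf_mult_L2 Linf_cnj L2_Uop)
  finally show ?thesis by (simp add: algebra_simps)
qed

theorem lemma5p2:
  fixes f g :: "complex \<Rightarrow> complex" and z :: complex
  assumes "f \<in> Linf" and "g \<in> Linf" and "cmod z < 1"
  defines "K \<equiv> (\<lambda>h. Hank f (Toep g h))"
  shows "\<forall>h\<in>H2. AE w in circ.
           K (Toep (phiz z) h) w =
           Toep (tildeop (phiz z)) (K h) w
             - rank1 (Hank f (kz z)) (adjH2 (Hank g) (kz (cnj z))) h w"
proof
  fix h assume h: "h \<in> H2"
  note f = assms(1) and g = assms(2) and z = assms(3)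
  define c where "c = inner2 h (adjH2 (Hank g) (kz (cnj z)))"
  have "AE w in circ. Hank f (Toep g (Toep (phiz z) h)) w
      = Toep (tildeop (phiz z)) (Hank f (Toep g h)) w - c * Hank f (kz z) w"
  proof (rule H2_AE_eq_if_inner2_eq)
    have HT: "Hank f (Toep g h) \<in> H2" by (rule Hank_H2[OF f H2_L2[OF Toep_H2[OF g H2_L2[OF h]]]])
    have TH: "Toep (phiz z) h \<in> H2" by (rule Toep_bounded_H2[OF _ phiz_bounded[OF z] H2_L2[OF h]]) simp
    have TV: "Toep (tildeop (phiz z)) (Hank f (Toep g h)) \<in> H2"
      by (rule Toep_bounded_H2[OF _ tildeop_phiz_bounded[OF z] H2_L2[OF HT]]) simp
    have HK: "Hank f (kz z) \<in> H2" by (rule Hank_H2[OF f H2_L2[OF H2_kz[OF z]]])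
    show "Hank f (Toep g (Toep (phiz z) h)) \<in> H2"
      by (rule Hank_H2[OF f H2_L2[OF Toep_H2[OF g H2_L2[OF TH]]]])
    show "(\<lambda>w. Toep (tildeop (phiz z)) (Hank f (Toep g h)) w - c * Hank f (kz z) w) \<in> H2"
      by (rule H2_diff[OF TV H2_cmult[OF HK]])
    fix k assume k: "k \<in> H2"
    show "inner2 (Hank f (Toep g (Toep (phiz z) h))) k
        = inner2 (\<lambda>w. Toep (tildeop (phiz z)) (Hank f (Toep g h)) w - c * Hank f (kz z) w) k"
      using H2_L2[OF TV] L2_cmult[OF H2_L2[OF HK]] H2_L2[OF k]
      by (simp add: inner2_Hank_Toep_phiz_commutator[OF f g z h k] c_def inner2_diff_left inner2_cmult_left)
  qed
  then show "AE w in circ. K (Toep (phiz z) h) w = Toep (tildeop (phiz z)) (K h) w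
      - rank1 (Hank f (kz z)) (adjH2 (Hank g) (kz (cnj z))) h w"
    by (simp add: K_def rank1_def c_def)
qed

end
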